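(* Let $p\ge 0$ and $k\ge 1$ be integers and $n\ge (p+1)k$. If $p\ge 1$ then $$\mathit{Gen}_p(n,k)=\bigcup_{j=1}^{k}\{0^{pj-i}1^{j-1}0^i1(0^p1)^{k-j}0^{n-(p+1)k}\ :\ 0\le i\le p-1\}\ \cup\ \{0^i1^k0^{n-i-k}\ :\ pk+1\le i\le n-k\}.$$ If $p=0$ then $\mathit{Gen}_0(n,k)=\{0^i1^k0^{n-i-k}\ :\ 0\le i\le n-k\}$. In all cases $|\mathit{Gen}_p(n,k)|=n-k+1-p$.
   Context: The weight of a binary word is its number of 1's. For integers $p,k\ge 0$ and $n\ge (p+1)k$, $C_n(p,k)$ is the set of binary words of length $n$ and weight $k$ such that every prefix contains at least $p$ times as many 0's as 1's (i.e. in every prefix, #0's $\ge p\cdot$ #1's). A homogeneous transposition of a binary word exchanges a 1 and a 0 such that no 1 occurs strictly between the two exchanged positions. For a set $S$ of binary words of the same length and weight and $\alpha\in S$, the list obtained by applying the greedy algorithm for $S$ to $\alpha$ is built as follows: start with the list $(\alpha)$; repeatedly, for the last word $w$ of the current list, among all words obtainable from $w$ by one homogeneous transposition that lie in $S$ and do not already occur in the list, choose the one obtained by transposing the leftmost possible 1 with (among transpositions of that 1) the leftmost possible 0, and append it; stop when no such word exists. $\mathcal{D}_p(\alpha)$ denotes the list obtained by applying the greedy algorithm for $C_n(p,k)$ to $\alpha\in C_n(p,k)$, and $\mathit{Gen}_p(n,k)$ is the set of $\alpha\in C_n(p,k)$ such that $\mathcal{D}_p(\alpha)$ contains every word of $C_n(p,k)$.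 *)

theory Defs
  imports Main
begin

text \<open>Binary words are lists of booleans; True stands for the letter 1, False for 0.\<close>

definition ones :: "bool list \<Rightarrow> nat" where
  "ones w = length (filter (\<lambda>b. b) w)"

definition zeros :: "bool list \<Rightarrow> nat" where
  "zeros w = length (filter (\<lambda>b. \<not> b) w)"

definition Cw :: "nat \<Rightarrow> nat \<Rightarrow> nat \<Rightarrow> bool list set" where
  "Cw n p k = {w. length w = n \<and> ones w = k \<and>
                  (\<forall>m \<le> n. p * ones (take m w) \<le> zeros (take m w))}"

definition swap_at :: "bool list \<Rightarrow> nat \<Rightarrow> nat \<Rightarrow> bool list" where
  "swap_at w i j = w[i := w ! j, j := w ! i]"

definition homog_transp :: "bool list \<Rightarrow> nat \<Rightarrow> nat \<Rightarrow> bool" where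
  "homog_transp w i j \<longleftrightarrow> i < length w \<and> j < length w \<and> w ! i \<and> \<not> w ! j \<and>
     (\<forall>m. min i j < m \<and> m < max i j \<longrightarrow> \<not> w ! m)"

definition greedy_cands :: "bool list set \<Rightarrow> bool list list \<Rightarrow> bool list \<Rightarrow> (nat \<times> nat) set" where
  "greedy_cands S L w = {(i, j). homog_transp w i j \<and> swap_at w i j \<in> S \<and> swap_at w i j \<notin> set L}"

definition greedy_next :: "bool list set \<Rightarrow> bool list list \<Rightarrow> bool list option" where
  "greedy_next S L =
     (let w = last L; P = greedy_cands S L w in
      if P = {} then None
      else (let i0 = (LEAST i. \<exists>j. (i, j) \<in> P);
                j0 = (LEAST j. (i0, j) \<in> P)
            in Some (swap_at w i0 j0)))"

fun greedy_iter :: "nat \<Rightarrow> bool list set \<Rightarrow> bool list list \<Rightarrow> bool list list" where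
  "greedy_iter 0 S L = L"
| "greedy_iter (Suc f) S L =
     (case greedy_next S L of None \<Rightarrow> L | Some v \<Rightarrow> greedy_iter f S (L @ [v]))"

text \<open>Since the list consists of
  distinct elements of S, at most card S steps are ever possible, so card S as fuel
  runs the algorithm until it stops.\<close>
definition greedy :: "bool list set \<Rightarrow> bool list \<Rightarrow> bool list list" where
  "greedy S \<alpha> = greedy_iter (card S) S [\<alpha>]"

definition Dp :: "nat \<Rightarrow> nat \<Rightarrow> nat \<Rightarrow> bool list \<Rightarrow> bool list list" where
  "Dp n p k \<alpha> = greedy (Cw n p k) \<alpha>"

definition Gen :: "nat \<Rightarrow> nat \<Rightarrow> nat \<Rightarrow> bool list set" where
  "Gen p n k = {\<alpha> \<in> Cw n p k. Cw n p k \<subseteq> set (Dp n p k \<alpha>)}"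

abbreviation zs :: "nat \<Rightarrow> bool list" where "zs a \<equiv> replicate a False"
abbreviation os :: "nat \<Rightarrow> bool list" where "os a \<equiv> replicate a True"

end

theory Submission
  imports Defs
begin

text \<open>Every word of \<open>C_n(p, k)\<close> ends in 0 or 1; the words ending in 0 form a copy of
  \<open>C_{n-1}(p, k)\<close> and, if \<open>(p + 1) k \<le> n\<close>, those ending in 1 a copy of \<open>C_{n-1}(p, k - 1)\<close>.
  A homogeneous transposition inside the prefix always beats one involving the last letter,
  so the greedy list started at \<open>\<beta> b\<close> is the greedy list of \<open>\<beta>\<close> in its half with \<open>b\<close>
  appended, followed by at most one move across to the other half, after which the greedy list
  of the other half is run and the algorithm stops. The end points of these lists are known
  by induction: \<open>0^{n-k}1^k\<close>, except for the list started at \<open>0^{n-k}1^k\<close> itself, which ends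
  at an explicit word. Induction on \<open>n\<close> then shows that \<open>D_p(\<alpha>)\<close> exhausts \<open>C_n(p, k)\<close> exactly
  when \<open>\<alpha>\<close> arises from some \<open>0^{m-k}1^k\<close> by appending 0s, and 1s only when they complete
  a prefix of length \<open>(p + 1)\<close> times its weight. This inductive description yields both the
  explicit list of generators and their number.\<close>

subsection \<open>Words and the sets \<open>C_n(p, k)\<close>\<close>

lemma ones_simps [simp]:
  "ones [] = 0" "ones (b # w) = (if b then Suc (ones w) else ones w)"
  "ones (xs @ ys) = ones xs + ones ys" "ones (zs n) = 0" "ones (os n) = n"
  by (auto simp: ones_def filter_replicate)

lemma zeros_simps [simp]:
  "zeros [] = 0" "zeros (b # w) = (if b then zeros w else Suc (zeros w))"
  "zeros (xs @ ys) = zeros xs + zeros ys" "zeros (zs n) = n" "zeros (os n) = 0"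
  by (auto simp: zeros_def filter_replicate)

lemma ones_add_zeros: "ones w + zeros w = length w"
  by (induct w) auto

lemma ones_eq_0_iff: "ones w = 0 \<longleftrightarrow> w = zs (length w)"
  by (induct w) auto

lemma mem_Cw_iff:
  "w \<in> Cw n p k \<longleftrightarrow> length w = n \<and> ones w = k \<and> (\<forall>i. (p + 1) * ones (take i w) \<le> i)"
proof -
  have prefix_iff: "p * ones (take i w) \<le> zeros (take i w) \<longleftrightarrow> (p + 1) * ones (take i w) \<le> i"
    if "i \<le> length w" for i
    using ones_add_zeros[of "take i w"] that by auto
  have "(\<forall>i \<le> length w. (p + 1) * ones (take i w) \<le> i) \<longleftrightarrow> (\<forall>i. (p + 1) * ones (take i w) \<le> i)"
    by (metis min_def nat_le_linear take_all order_trans)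
  then show ?thesis
    unfolding Cw_def using prefix_iff by auto
qed

lemma prefix_bound_snoc:
  "(\<forall>i. (p + 1) * ones (take i (w @ [b])) \<le> i) \<longleftrightarrow>
     (\<forall>i. (p + 1) * ones (take i w) \<le> i) \<and> (p + 1) * ones (w @ [b]) \<le> Suc (length w)"
  (is "(\<forall>i. ?B (w @ [b]) i) \<longleftrightarrow> (\<forall>i. ?B w i) \<and> _")
proof safe
  assume "\<forall>i. ?B (w @ [b]) i"
  then show "?B w i" for i
    by (cases "i \<le> length w") (auto dest: spec[of _ i] spec[of _ "length w"])
  show "(p + 1) * ones (w @ [b]) \<le> Suc (length w)"
    using \<open>\<forall>i. ?B (w @ [b]) i\<close> by (auto dest: spec[of _ "Suc (length w)"])
next
  fix i assume "\<forall>i. ?B w i" "(p + 1) * ones (w @ [b]) \<le> Suc (length w)"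
  then show "?B (w @ [b]) i"
    by (cases "i \<le> length w") auto
qed

lemma snoc_False_in_Cw: "w @ [False] \<in> Cw (Suc n) p k \<longleftrightarrow> w \<in> Cw n p k"
  unfolding mem_Cw_iff prefix_bound_snoc by (auto dest: spec[of _ "length w"])

lemma snoc_True_in_Cw:
  "w @ [True] \<in> Cw (Suc n) p (Suc k) \<longleftrightarrow> w \<in> Cw n p k \<and> (p + 1) * Suc k \<le> Suc n"
  unfolding mem_Cw_iff prefix_bound_snoc by auto

lemma Cw_weight_bound: "w \<in> Cw n p k \<Longrightarrow> (p + 1) * k \<le> n"
  unfolding mem_Cw_iff by (metis take_all order_refl)

lemma finite_Cw: "finite (Cw n p k)"
proof (rule finite_subset)
  show "Cw n p k \<subseteq> {w. set w \<subseteq> UNIV \<and> length w = n}"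
    by (auto simp: Cw_def)
qed (rule finite_lists_length_eq, simp)

lemma Cw_weight_0: "Cw n p 0 = {zs n}"
  by (auto simp: mem_Cw_iff ones_eq_0_iff take_replicate)

lemma Cw_Suc_nonempty: "w \<in> Cw (Suc n) p k \<Longrightarrow> w \<noteq> []"
  by (auto simp: Cw_def)

subsection \<open>The greedy step relative to a set of visited words\<close>

definition moves :: "bool list set \<Rightarrow> bool list set \<Rightarrow> bool list \<Rightarrow> (nat \<times> nat) set" where
  "moves S V w = {(i, j). homog_transp w i j \<and> swap_at w i j \<in> S \<and> swap_at w i j \<notin> V}"

definition greedy_step :: "bool list set \<Rightarrow> bool list set \<Rightarrow> bool list \<Rightarrow> bool list option" where
  "greedy_step S V w =
     (let P = moves S V w in
      if P = {} then None
      else (let i0 = (LEAST i. \<exists>j. (i, j) \<in> P);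
                j0 = (LEAST j. (i0, j) \<in> P)
            in Some (swap_at w i0 j0)))"

lemma greedy_next_eq_step: "greedy_next S L = greedy_step S (set L) (last L)"
  unfolding greedy_next_def greedy_step_def greedy_cands_def moves_def by (simp only: Let_def)

definition lex_least :: "(nat \<times> nat) set \<Rightarrow> nat \<Rightarrow> nat \<Rightarrow> bool" where
  "lex_least P i j \<longleftrightarrow> (i, j) \<in> P \<and> (\<forall>i' j'. (i', j') \<in> P \<longrightarrow> i < i' \<or> (i = i' \<and> j \<le> j'))"

lemma greedy_step_None_iff: "greedy_step S V w = None \<longleftrightarrow> moves S V w = {}"
  unfolding greedy_step_def by (simp add: Let_def)

lemma greedy_step_lex_least:
  assumes "lex_least (moves S V w) i j"
  shows "greedy_step S V w = Some (swap_at w i j)"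
proof -
  let ?P = "moves S V w"
  have ij: "(i, j) \<in> ?P" and least: "\<And>i' j'. (i', j') \<in> ?P \<Longrightarrow> i < i' \<or> (i = i' \<and> j \<le> j')"
    using assms unfolding lex_least_def by auto
  have "(LEAST i. \<exists>j. (i, j) \<in> ?P) = i"
    by (rule Least_equality) (use ij least in force)+
  moreover have "(LEAST j'. (i, j') \<in> ?P) = j"
    by (rule Least_equality) (use ij least in force)+
  ultimately show ?thesis
    using ij unfolding greedy_step_def Let_def by auto
qed

lemma lex_least_exists:
  assumes "P \<noteq> {}"
  obtains i j where "lex_least P i j"
proof -
  define i0 where "i0 = (LEAST i. \<exists>j. (i, j) \<in> P)"
  define j0 where "j0 = (LEAST j. (i0, j) \<in> P)"
  have "\<exists>j. (i0, j) \<in> P"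
    unfolding i0_def by (rule LeastI_ex) (use assms in auto)
  then have "(i0, j0) \<in> P"
    unfolding j0_def by (rule LeastI_ex)
  moreover have "i0 \<le> i'" and "i0 = i' \<Longrightarrow> j0 \<le> j'" if "(i', j') \<in> P" for i' j'
    using that unfolding i0_def j0_def by (auto intro: Least_le)
  ultimately have "lex_least P i0 j0"
    unfolding lex_least_def by (auto simp: order.order_iff_strict)
  then show thesis by (rule that)
qed

lemma greedy_step_SomeE:
  assumes "greedy_step S V w = Some v"
  obtains i j where "lex_least (moves S V w) i j" "v = swap_at w i j"
proof -
  have "moves S V w \<noteq> {}"
    using assms greedy_step_None_iff[of S V w] by auto
  then obtain i j where "lex_least (moves S V w) i j"
    by (rule lex_least_exists)
  with greedy_step_lex_least[OF this] assms that show ?thesis by auto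
qed

lemma greedy_step_Some_mem: "greedy_step S V w = Some v \<Longrightarrow> v \<in> S \<and> v \<notin> V"
  by (erule greedy_step_SomeE) (auto simp: lex_least_def moves_def)

subsection \<open>Runs of the greedy algorithm\<close>

text \<open>A fuel-free relational form of \<open>greedy_iter\<close>: \<open>greedy_run S L R\<close> says that the greedy
  algorithm, continued from the list \<open>L\<close>, stops with the list \<open>R\<close>.\<close>

inductive greedy_run :: "bool list set \<Rightarrow> bool list list \<Rightarrow> bool list list \<Rightarrow> bool" where
  stop: "greedy_next S L = None \<Longrightarrow> greedy_run S L L"
| step: "greedy_next S L = Some v \<Longrightarrow> greedy_run S (L @ [v]) R \<Longrightarrow> greedy_run S L R"

lemma greedy_run_unique: "greedy_run S L R \<Longrightarrow> greedy_run S L R' \<Longrightarrow> R = R'"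
proof (induction arbitrary: R' rule: greedy_run.induct)
  case (stop S L)
  from stop(2) show ?case
  proof cases
    case (step v)
    with stop(1) show ?thesis by simp
  qed simp
next
  case (step S L v R)
  from step.prems show ?case
  proof cases
    case stop
    with step(1) show ?thesis by simp
  next
    case (step v')
    with step.hyps step.IH show ?thesis by simp
  qed
qed

lemma greedy_run_final: "greedy_run S L R \<Longrightarrow> greedy_next S R = None"
  by (induction rule: greedy_run.induct) auto

lemma greedy_run_prefix: "greedy_run S L R \<Longrightarrow> \<exists>M. R = L @ M"
  by (induction rule: greedy_run.induct) auto

lemma greedy_run_subset: "greedy_run S L R \<Longrightarrow> set L \<subseteq> S \<Longrightarrow> set R \<subseteq> S"
  by (induction rule: greedy_run.induct) (auto simp: greedy_next_eq_step dest: greedy_step_Some_mem)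

lemma greedy_iter_run:
  assumes "finite S" "set L \<subseteq> S" "distinct L" "L \<noteq> []" "card S \<le> f + length L"
  shows "greedy_run S L (greedy_iter f S L)"
  using assms
proof (induction f arbitrary: L)
  case 0
  then have "set L = S"
    by (metis add_0 card_mono card_subset_eq distinct_card le_antisym)
  then have "greedy_next S L = None"
    by (auto simp: greedy_next_eq_step greedy_step_None_iff moves_def)
  then show ?case by (simp add: greedy_run.stop)
next
  case (Suc f)
  show ?case
  proof (cases "greedy_next S L")
    case None
    then show ?thesis by (simp add: greedy_run.stop)
  next
    case (Some v)
    then have "v \<in> S" "v \<notin> set L"
      using greedy_step_Some_mem by (auto simp: greedy_next_eq_step)
    then have "greedy_run S (L @ [v]) (greedy_iter f S (L @ [v]))"
      using Suc.prems by (intro Suc.IH) auto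
    then show ?thesis using Some by (simp add: greedy_run.step)
  qed
qed

lemma greedy_run_greedy: "finite S \<Longrightarrow> \<alpha> \<in> S \<Longrightarrow> greedy_run S [\<alpha>] (greedy S \<alpha>)"
  unfolding greedy_def by (rule greedy_iter_run) auto

lemma greedy_eqI: "finite S \<Longrightarrow> \<alpha> \<in> S \<Longrightarrow> greedy_run S [\<alpha>] Q \<Longrightarrow> greedy S \<alpha> = Q"
  using greedy_run_greedy greedy_run_unique by blast

lemma greedy_run_last_in:
  assumes "greedy_run S [\<alpha>] R" "\<alpha> \<in> S"
  shows "R \<noteq> []" "last R \<in> S"
proof -
  show "R \<noteq> []"
    using greedy_run_prefix[OF assms(1)] by auto
  then show "last R \<in> S"
    using greedy_run_subset[OF assms(1)] assms(2) last_in_set by auto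
qed

subsection \<open>Greedy steps on words with a fixed last letter\<close>

lemma homog_transp_less_length: "homog_transp w i j \<Longrightarrow> i < length w \<and> j < length w"
  by (simp add: homog_transp_def)

lemma homog_transp_snoc:
  "i < length w \<Longrightarrow> j < length w \<Longrightarrow> homog_transp (w @ [b]) i j \<longleftrightarrow> homog_transp w i j"
  unfolding homog_transp_def by (auto simp: nth_append)

lemma swap_at_snoc: "i < length w \<Longrightarrow> j < length w \<Longrightarrow> swap_at (w @ [b]) i j = swap_at w i j @ [b]"
  unfolding swap_at_def by (auto simp: nth_append list_update_append)

lemma moves_snoc:
  "i < length w \<Longrightarrow> j < length w \<Longrightarrow>
   (i, j) \<in> moves S V (w @ [b]) \<longleftrightarrow> (i, j) \<in> moves {u. u @ [b] \<in> S} {u. u @ [b] \<in> V} w"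
  unfolding moves_def by (simp add: homog_transp_snoc swap_at_snoc)

text \<open>A move involving the last position either moves the final 1 or moves the last 1 of \<open>w\<close>
  onto the final 0; in both cases every move inside the prefix is lexicographically smaller.\<close>

lemma greedy_step_snoc_Some:
  assumes "greedy_step {u. u @ [b] \<in> S} {u. u @ [b] \<in> V} w = Some x"
  shows "greedy_step S V (w @ [b]) = Some (x @ [b])"
proof -
  let ?H = "{u. u @ [b] \<in> S}" and ?Vb = "{u. u @ [b] \<in> V}"
  obtain i j where least: "lex_least (moves ?H ?Vb w) i j" and x: "x = swap_at w i j"
    using assms by (rule greedy_step_SomeE)
  have ij: "(i, j) \<in> moves ?H ?Vb w"
    using least by (simp add: lex_least_def)
  then have ij_len: "i < length w" "j < length w" and wi: "w ! i"
    by (auto simp: moves_def homog_transp_def)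
  have "lex_least (moves S V (w @ [b])) i j"
    unfolding lex_least_def
  proof (intro conjI allI impI)
    show "(i, j) \<in> moves S V (w @ [b])"
      using moves_snoc[OF ij_len] ij by simp
    fix i' j' assume move: "(i', j') \<in> moves S V (w @ [b])"
    then have h': "homog_transp (w @ [b]) i' j'"
      by (simp add: moves_def)
    then have "i' \<le> length w" "j' \<le> length w"
      by (auto dest: homog_transp_less_length)
    show "i < i' \<or> i = i' \<and> j \<le> j'"
    proof (cases "i' < length w \<and> j' < length w")
      case True
      then show ?thesis
        using moves_snoc move least by (auto simp: lex_least_def)
    next
      case False
      show ?thesis
      proof (cases "i' = length w")
        case False
        with \<open>\<not> (i' < length w \<and> j' < length w)\<close> \<open>i' \<le> length w\<close> \<open>j' \<le> length w\<close>
        have "i' < length w" "j' = length w" by auto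
        then have "\<not> w ! m" if "i' < m" "m < length w" for m
          using h' that unfolding homog_transp_def by (auto simp: nth_append)
        then show ?thesis
          using wi ij_len \<open>j' = length w\<close> by (metis linorder_neqE_nat order_less_imp_le)
      qed (use ij_len in simp)
    qed
  qed
  from greedy_step_lex_least[OF this] show ?thesis
    using x ij_len by (simp add: swap_at_snoc)
qed

lemma moves_snoc_crossing:
  assumes "greedy_step {u. u @ [b] \<in> S} {u. u @ [b] \<in> V} w = None" "(i, j) \<in> moves S V (w @ [b])"
  shows "i = length w \<or> j = length w"
proof (rule ccontr)
  assume "\<not> (i = length w \<or> j = length w)"
  moreover have "i \<le> length w" "j \<le> length w"
    using assms(2) by (auto simp: moves_def dest: homog_transp_less_length)
  ultimately have "(i, j) \<in> moves {u. u @ [b] \<in> S} {u. u @ [b] \<in> V} w"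
    using moves_snoc assms(2) by auto
  then show False
    using assms(1) by (simp add: greedy_step_None_iff)
qed

lemma swap_at_last_True:
  "j < length w \<Longrightarrow> \<not> w ! j \<Longrightarrow> swap_at (w @ [True]) (length w) j = w[j := True] @ [False]"
  unfolding swap_at_def by (auto simp: nth_append list_update_append)

lemma swap_at_last_False:
  "i < length w \<Longrightarrow> w ! i \<Longrightarrow> swap_at (w @ [False]) i (length w) = w[i := False] @ [True]"
  unfolding swap_at_def by (auto simp: nth_append list_update_append)

lemma homog_transp_to_last_False:
  assumes "homog_transp (w @ [False]) i (length w)"
  shows "i < length w" "w ! i" "\<And>m. i < m \<Longrightarrow> m < length w \<Longrightarrow> \<not> w ! m"
  using assms unfolding homog_transp_def by (auto simp: nth_append split: if_splits)

lemma homog_transp_from_last_True: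
  assumes "homog_transp (w @ [True]) (length w) j"
  shows "j < length w" "\<not> w ! j" "\<And>m. j < m \<Longrightarrow> m < length w \<Longrightarrow> \<not> w ! m"
  using assms unfolding homog_transp_def by (auto simp: nth_append split: if_splits)

lemma moves_snoc_False_crossing:
  assumes "greedy_step {u. u @ [False] \<in> S} {u. u @ [False] \<in> V} w = None"
    and "(i, j) \<in> moves S V (w @ [False])"
  shows "j = length w" "homog_transp (w @ [False]) i (length w)"
    "swap_at (w @ [False]) i j \<in> S" "swap_at (w @ [False]) i j \<notin> V"
proof -
  have "i \<noteq> length w"
    using assms(2) by (auto simp: moves_def homog_transp_def nth_append)
  then show "j = length w"
    using moves_snoc_crossing[OF assms] by auto
  then show "homog_transp (w @ [False]) i (length w)"
    "swap_at (w @ [False]) i j \<in> S" "swap_at (w @ [False]) i j \<notin> V"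
    using assms(2) by (auto simp: moves_def)
qed

lemma moves_snoc_True_crossing:
  assumes "greedy_step {u. u @ [True] \<in> S} {u. u @ [True] \<in> V} w = None"
    and "(i, j) \<in> moves S V (w @ [True])"
  shows "i = length w" "homog_transp (w @ [True]) (length w) j"
    "swap_at (w @ [True]) i j \<in> S" "swap_at (w @ [True]) i j \<notin> V"
proof -
  have "j \<noteq> length w"
    using assms(2) by (auto simp: moves_def homog_transp_def nth_append)
  then show "i = length w"
    using moves_snoc_crossing[OF assms] by auto
  then show "homog_transp (w @ [True]) (length w) j"
    "swap_at (w @ [True]) i j \<in> S" "swap_at (w @ [True]) i j \<notin> V"
    using assms(2) by (auto simp: moves_def)
qed

lemma greedy_step_snoc_False_None:
  assumes "greedy_step {u. u @ [False] \<in> S} {u. u @ [False] \<in> V} w = None"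
    and "\<And>v. v @ [True] \<in> S \<Longrightarrow> v @ [True] \<in> V"
  shows "greedy_step S V (w @ [False]) = None"
proof -
  have "(i, j) \<notin> moves S V (w @ [False])" for i j
  proof
    assume "(i, j) \<in> moves S V (w @ [False])"
    note crossing = moves_snoc_False_crossing[OF assms(1) this]
    then show False
      using assms(2) homog_transp_to_last_False[OF crossing(2)] by (simp add: swap_at_last_False)
  qed
  then show ?thesis
    by (auto simp: greedy_step_None_iff)
qed

lemma greedy_step_snoc_False_cross:
  assumes "greedy_step {u. u @ [False] \<in> S} {u. u @ [False] \<in> V} w = None"
    and w: "w = a @ [True] @ zs c"
    and "(a @ zs (Suc c)) @ [True] \<in> S" "(a @ zs (Suc c)) @ [True] \<notin> V"
  shows "greedy_step S V (w @ [False]) = Some ((a @ zs (Suc c)) @ [True])"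
proof -
  have a_len: "length a < length w" "w ! length a"
    using w by (auto simp: nth_append)
  have swap: "swap_at (w @ [False]) (length a) (length w) = (a @ zs (Suc c)) @ [True]"
    using swap_at_last_False[OF a_len] w by (simp add: list_update_append)
  have homog: "homog_transp (w @ [False]) (length a) (length w)"
    using w by (auto simp: homog_transp_def nth_append)
  have "lex_least (moves S V (w @ [False])) (length a) (length w)"
    unfolding lex_least_def
  proof (intro conjI allI impI)
    show "(length a, length w) \<in> moves S V (w @ [False])"
      using homog swap assms by (simp add: moves_def)
    fix i' j' assume "(i', j') \<in> moves S V (w @ [False])"
    note crossing = moves_snoc_False_crossing[OF assms(1) this]
    note to_last = homog_transp_to_last_False[OF crossing(2)]
    have "i' = length a"
    proof (rule ccontr)
      assume "i' \<noteq> length a"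
      then show False
        using to_last to_last(3)[of "length a"] w by (cases "i' < length a") (auto simp: nth_append)
    qed
    then show "length a < i' \<or> length a = i' \<and> length w \<le> j'"
      using crossing(1) by simp
  qed
  from greedy_step_lex_least[OF this] swap show ?thesis by simp
qed

lemma greedy_step_snoc_True_None:
  assumes "greedy_step {u. u @ [True] \<in> S} {u. u @ [True] \<in> V} w = None"
    and "\<And>j. homog_transp (w @ [True]) (length w) j \<Longrightarrow>
           w[j := True] @ [False] \<notin> S \<or> w[j := True] @ [False] \<in> V"
  shows "greedy_step S V (w @ [True]) = None"
proof -
  have "(i, j) \<notin> moves S V (w @ [True])" for i j
  proof
    assume "(i, j) \<in> moves S V (w @ [True])"
    note crossing = moves_snoc_True_crossing[OF assms(1) this]
    then show False
      using assms(2) homog_transp_from_last_True[OF crossing(2)] by (simp add: swap_at_last_True)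
  qed
  then show ?thesis
    by (auto simp: greedy_step_None_iff)
qed

lemma greedy_step_snoc_True_cross:
  assumes "greedy_step {u. u @ [True] \<in> S} {u. u @ [True] \<in> V} w = None"
    and j0: "homog_transp (w @ [True]) (length w) j0"
      "w[j0 := True] @ [False] \<in> S" "w[j0 := True] @ [False] \<notin> V"
    and less: "\<And>j. j < j0 \<Longrightarrow> homog_transp (w @ [True]) (length w) j \<Longrightarrow>
                 w[j := True] @ [False] \<notin> S \<or> w[j := True] @ [False] \<in> V"
  shows "greedy_step S V (w @ [True]) = Some (w[j0 := True] @ [False])"
proof -
  note j0_props = homog_transp_from_last_True[OF j0(1)]
  have "lex_least (moves S V (w @ [True])) (length w) j0"
    unfolding lex_least_def
  proof (intro conjI allI impI)
    show "(length w, j0) \<in> moves S V (w @ [True])"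
      using j0 j0_props by (simp add: moves_def swap_at_last_True)
    fix i' j' assume "(i', j') \<in> moves S V (w @ [True])"
    note crossing = moves_snoc_True_crossing[OF assms(1) this]
    have "\<not> j' < j0"
      using less[of j'] crossing homog_transp_from_last_True[OF crossing(2)]
      by (auto simp: swap_at_last_True)
    then show "length w < i' \<or> length w = i' \<and> j0 \<le> j'"
      using crossing(1) by auto
  qed
  from greedy_step_lex_least[OF this] show ?thesis
    using j0_props by (simp add: swap_at_last_True)
qed

lemma no_homog_transp_after_True:
  assumes "w \<noteq> []" "last w"
  shows "\<not> homog_transp (w @ [True]) (length w) j"
proof
  assume "homog_transp (w @ [True]) (length w) j"
  note j = homog_transp_from_last_True[OF this]
  have "w ! (length w - 1)"
    using assms by (simp add: last_conv_nth)
  then show False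
    using j assms(1) by (cases "j = length w - 1") auto
qed

subsection \<open>Lifting a greedy run on a half to the whole set\<close>

lemma greedy_run_snoc_lift_gen:
  "greedy_run H L R \<Longrightarrow> H = {u. u @ [b] \<in> S} \<Longrightarrow> P \<noteq> [] \<Longrightarrow> L \<noteq> [] \<Longrightarrow>
   last P = last L @ [b] \<Longrightarrow> {u. u @ [b] \<in> set P} = set L \<Longrightarrow>
   greedy_run S (P @ map (\<lambda>u. u @ [b]) (drop (length L) R)) Q \<Longrightarrow> greedy_run S P Q"
proof (induction arbitrary: P rule: greedy_run.induct)
  case (stop H L)
  then show ?case by simp
next
  case (step H L v R)
  obtain M where "R = (L @ [v]) @ M"
    using greedy_run_prefix[OF step(2)] by blast
  then have drop_R: "drop (length L) R = v # drop (length (L @ [v])) R"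
    by simp
  have "greedy_step {u. u @ [b] \<in> S} {u. u @ [b] \<in> set P} (last L) = Some v"
    using step(1) step.prems(1,5) by (simp add: greedy_next_eq_step)
  then have next_P: "greedy_next S P = Some (v @ [b])"
    using greedy_step_snoc_Some step.prems(4) by (simp add: greedy_next_eq_step)
  have "greedy_run S (P @ [v @ [b]]) Q"
  proof (rule step.IH)
    show "{u. u @ [b] \<in> set (P @ [v @ [b]])} = set (L @ [v])"
      using step.prems(5) by auto
    show "greedy_run S ((P @ [v @ [b]]) @ map (\<lambda>u. u @ [b]) (drop (length (L @ [v])) R)) Q"
      using step.prems(6) drop_R by simp
  qed (use step in auto)
  then show ?case
    using next_P by (rule greedy_run.step[rotated])
qed

lemma greedy_run_snoc_lift:
  assumes "greedy_run {u. u @ [b] \<in> S} [\<beta>] R" "\<forall>u. u @ [b] \<notin> set P"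
    and "greedy_run S (P @ map (\<lambda>u. u @ [b]) R) Q"
  shows "greedy_run S (P @ [\<beta> @ [b]]) Q"
proof -
  obtain M where M: "R = [\<beta>] @ M"
    using greedy_run_prefix[OF assms(1)] by blast
  show ?thesis
  proof (rule greedy_run_snoc_lift_gen[OF assms(1) refl])
    show "{u. u @ [b] \<in> set (P @ [\<beta> @ [b]])} = set [\<beta>]"
      using assms(2) by auto
    show "greedy_run S ((P @ [\<beta> @ [b]]) @ map (\<lambda>u. u @ [b]) (drop (length [\<beta>]) R)) Q"
      using assms(3) M by simp
  qed auto
qed

lemma greedy_run_snoc_final:
  assumes "greedy_run {u. u @ [b] \<in> S} [\<beta>] R" "\<forall>u. u @ [b] \<notin> set P"
  shows "greedy_step {u. u @ [b] \<in> S} {u. u @ [b] \<in> set (P @ map (\<lambda>u. u @ [b]) R)} (last R) = None"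
    and "last (P @ map (\<lambda>u. u @ [b]) R) = last R @ [b]"
proof -
  have "R \<noteq> []"
    using greedy_run_prefix[OF assms(1)] by auto
  have "{u. u @ [b] \<in> set (P @ map (\<lambda>u. u @ [b]) R)} = set R"
    using assms(2) by auto
  then show "greedy_step {u. u @ [b] \<in> S} {u. u @ [b] \<in> set (P @ map (\<lambda>u. u @ [b]) R)} (last R) = None"
    using greedy_run_final[OF assms(1)] by (simp add: greedy_next_eq_step)
  show "last (P @ map (\<lambda>u. u @ [b]) R) = last R @ [b]"
    using \<open>R \<noteq> []\<close> by (simp add: last_map)
qed

lemma greedy_run_final_phase_True:
  assumes run: "greedy_run {v. v @ [True] \<in> S} [u] R" and P: "\<forall>v. v @ [True] \<notin> set P"
    and stuck: "\<And>j. homog_transp (last R @ [True]) (length (last R)) j \<Longrightarrow>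
                  (last R)[j := True] @ [False] \<notin> S \<or> (last R)[j := True] @ [False] \<in> set P"
  shows "greedy_run S (P @ [u @ [True]]) (P @ map (\<lambda>v. v @ [True]) R)"
proof (rule greedy_run_snoc_lift[OF run P], rule greedy_run.stop)
  note final = greedy_run_snoc_final[OF run P]
  show "greedy_next S (P @ map (\<lambda>v. v @ [True]) R) = None"
    unfolding greedy_next_eq_step final(2)
    by (rule greedy_step_snoc_True_None[OF final(1)]) (use stuck in auto)
qed

lemma greedy_run_final_phase_False:
  assumes run: "greedy_run {v. v @ [False] \<in> S} [u] R" and P: "\<forall>v. v @ [False] \<notin> set P"
    and stuck: "\<And>v. v @ [True] \<in> S \<Longrightarrow> v @ [True] \<in> set P"
  shows "greedy_run S (P @ [u @ [False]]) (P @ map (\<lambda>v. v @ [False]) R)"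
proof (rule greedy_run_snoc_lift[OF run P], rule greedy_run.stop)
  note final = greedy_run_snoc_final[OF run P]
  show "greedy_next S (P @ map (\<lambda>v. v @ [False]) R) = None"
    unfolding greedy_next_eq_step final(2)
    by (rule greedy_step_snoc_False_None[OF final(1)]) (use stuck in auto)
qed

lemma greedy_next_cross_to_True:
  assumes run: "greedy_run {v. v @ [False] \<in> S} [\<beta>] R" and last: "last R = a @ [True] @ zs c"
    and mem: "(a @ zs (Suc c)) @ [True] \<in> S"
  shows "greedy_next S (map (\<lambda>v. v @ [False]) R) = Some ((a @ zs (Suc c)) @ [True])"
proof -
  note final = greedy_run_snoc_final[OF run, of "[]", simplified]
  have "greedy_step S (set (map (\<lambda>v. v @ [False]) R)) (last R @ [False]) = Some ((a @ zs (Suc c)) @ [True])"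
    by (rule greedy_step_snoc_False_cross[OF _ last mem]) (use final(1) in auto)
  then show ?thesis
    using final(2) by (simp add: greedy_next_eq_step)
qed

lemma subset_snoc_image_iff:
  assumes "\<And>u. u @ [False] \<in> S \<longleftrightarrow> u \<in> A" "\<And>u. u @ [True] \<in> S \<longleftrightarrow> u \<in> B"
    and "[] \<notin> S"
  shows "S \<subseteq> (\<lambda>u. u @ [False]) ` X \<union> (\<lambda>u. u @ [True]) ` Y \<longleftrightarrow> A \<subseteq> X \<and> B \<subseteq> Y"
proof
  assume S: "S \<subseteq> (\<lambda>u. u @ [False]) ` X \<union> (\<lambda>u. u @ [True]) ` Y"
  show "A \<subseteq> X \<and> B \<subseteq> Y"
  proof
    show "A \<subseteq> X"
    proof
      fix u assume "u \<in> A"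
      then have "u @ [False] \<in> S" using assms(1) by simp
      then show "u \<in> X" using S by auto
    qed
    show "B \<subseteq> Y"
    proof
      fix u assume "u \<in> B"
      then have "u @ [True] \<in> S" using assms(2) by simp
      then show "u \<in> Y" using S by auto
    qed
  qed
next
  assume AB: "A \<subseteq> X \<and> B \<subseteq> Y"
  show "S \<subseteq> (\<lambda>u. u @ [False]) ` X \<union> (\<lambda>u. u @ [True]) ` Y"
  proof
    fix w assume "w \<in> S"
    moreover obtain v b where "w = v @ [b]"
      using \<open>w \<in> S\<close> assms(3) by (metis rev_exhaust)
    ultimately show "w \<in> (\<lambda>u. u @ [False]) ` X \<union> (\<lambda>u. u @ [True]) ` Y"
      using AB assms(1,2) by (cases b) auto
  qed
qed

subsection \<open>Generators, inductively\<close>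

definition tail_ones :: "nat \<Rightarrow> nat \<Rightarrow> bool list" where
  "tail_ones n k = zs (n - k) @ os k"

inductive gen_word :: "nat \<Rightarrow> nat \<Rightarrow> nat \<Rightarrow> bool list \<Rightarrow> bool" for p where
  tail: "(p + 1) * k \<le> n \<Longrightarrow> gen_word p n k (tail_ones n k)"
| snoc_False: "gen_word p n k w \<Longrightarrow> (p + 1) * k \<le> n \<Longrightarrow> gen_word p (Suc n) k (w @ [False])"
| snoc_True: "gen_word p n k w \<Longrightarrow> Suc n = (p + 1) * Suc k \<Longrightarrow> gen_word p (Suc n) (Suc k) (w @ [True])"

lemma tail_ones_in_Cw:
  assumes "(p + 1) * k \<le> n"
  shows "tail_ones n k \<in> Cw n p k"
proof -
  have "(p + 1) * ones (take i (tail_ones n k)) \<le> i" for i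
  proof (cases "i \<le> n - k")
    case False
    then have "ones (take i (tail_ones n k)) = min (i - (n - k)) k"
      by (simp add: tail_ones_def take_replicate)
    moreover have "(p + 1) * min (i - (n - k)) k \<le> min (i - (n - k)) k + p * k"
      by simp
    moreover have "k + p * k \<le> n"
      using assms by (simp add: algebra_simps)
    moreover have "min (i - (n - k)) k \<le> i - (n - k)" "i - (n - k) + (n - k) = i"
      using False by auto
    ultimately show ?thesis
      by (simp only: mult.commute[of "p + 1"]) linarith
  qed (simp add: tail_ones_def take_replicate)
  then show ?thesis
    using assms unfolding mem_Cw_iff by (simp add: tail_ones_def)
qed

lemma gen_word_in_Cw: "gen_word p n k w \<Longrightarrow> w \<in> Cw n p k"
  by (induction rule: gen_word.induct)
    (simp_all add: tail_ones_in_Cw snoc_False_in_Cw snoc_True_in_Cw)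

lemma tail_ones_snoc_True: "k \<le> n \<Longrightarrow> tail_ones (Suc n) (Suc k) = tail_ones n k @ [True]"
  by (simp add: tail_ones_def replicate_append_same)

lemma tail_ones_ne_snoc_False: "0 < k \<Longrightarrow> tail_ones n k \<noteq> w @ [False]"
  by (cases k) (auto simp: tail_ones_def simp flip: replicate_append_same)

lemma sorted_tail_ones: "sorted (tail_ones n k)"
  by (auto simp: tail_ones_def sorted_append)

lemma gen_word_append_zs: "gen_word p n k w \<Longrightarrow> (p + 1) * k \<le> n \<Longrightarrow> gen_word p (n + c) k (w @ zs c)"
proof (induction c)
  case (Suc c)
  then have "gen_word p (Suc (n + c)) k ((w @ zs c) @ [False])"
    by (intro gen_word.snoc_False) auto
  then show ?case
    by (simp add: replicate_append_same)
qed simp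

lemma gen_word_tail_ones_zs: "(p + 1) * k \<le> n \<Longrightarrow> gen_word p (n + c) k (tail_ones n k @ zs c)"
  by (rule gen_word_append_zs[OF gen_word.tail])

lemma gen_word_snoc_False_iff:
  assumes "0 < k"
  shows "gen_word p (Suc m) k (\<beta> @ [False]) \<longleftrightarrow> gen_word p m k \<beta> \<and> (p + 1) * k \<le> m"
proof
  assume "gen_word p (Suc m) k (\<beta> @ [False])"
  then show "gen_word p m k \<beta> \<and> (p + 1) * k \<le> m"
  proof cases
    case tail
    then show ?thesis
      using tail_ones_ne_snoc_False[OF assms] by metis
  qed auto
qed (auto intro: gen_word.snoc_False)

lemma gen_word_snoc_True_iff:
  assumes "0 < k"
  shows "gen_word p (Suc m) k (\<beta> @ [True]) \<longleftrightarrow>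
     (\<beta> @ [True] = tail_ones (Suc m) k \<and> (p + 1) * k \<le> Suc m) \<or>
     (Suc m = (p + 1) * k \<and> gen_word p m (k - 1) \<beta>)"
proof
  assume "gen_word p (Suc m) k (\<beta> @ [True])"
  then show "(\<beta> @ [True] = tail_ones (Suc m) k \<and> (p + 1) * k \<le> Suc m) \<or>
     (Suc m = (p + 1) * k \<and> gen_word p m (k - 1) \<beta>)"
    by cases auto
next
  assume "(\<beta> @ [True] = tail_ones (Suc m) k \<and> (p + 1) * k \<le> Suc m) \<or>
     (Suc m = (p + 1) * k \<and> gen_word p m (k - 1) \<beta>)"
  then show "gen_word p (Suc m) k (\<beta> @ [True])"
    using gen_word.snoc_True[of p m "k - 1" \<beta>] gen_word.tail[of p k "Suc m"] assms by auto
qed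

lemma gen_word_weight_0: "gen_word p n 0 w \<longleftrightarrow> w = zs n"
  using gen_word_in_Cw[of p n 0 w] Cw_weight_0 gen_word.tail[of p 0 n] by (auto simp: tail_ones_def)

lemma last_True_decomp: "True \<in> set w \<Longrightarrow> \<exists>a c. w = a @ [True] @ zs c"
proof (induction w rule: rev_induct)
  case (snoc x xs)
  show ?case
  proof (cases x)
    case False
    then obtain a c where "xs = a @ [True] @ zs c"
      using snoc by auto
    then show ?thesis
      using False by (intro exI[of _ a] exI[of _ "Suc c"]) (simp add: replicate_append_same)
  qed (intro exI[of _ xs] exI[of _ 0], simp)
qed simp

lemma Cw_last_True_position:
  assumes "a @ [True] @ zs c \<in> Cw m p k"
  shows "(p + 1) * k \<le> Suc (length a)"
proof -
  have "ones (take (Suc (length a)) (a @ [True] @ zs c)) = k"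
    using assms by (simp add: Cw_def)
  then show ?thesis
    using assms unfolding mem_Cw_iff by (metis (no_types))
qed

lemma Cw_delete_last_True:
  assumes "a @ [True] @ zs c \<in> Cw m p k"
  shows "a @ zs (Suc c) \<in> Cw m p (k - 1)"
proof -
  have "ones (take i (a @ zs (Suc c))) \<le> ones (take i (a @ [True] @ zs c))" for i
    by (cases "i \<le> length a") (auto simp: take_Cons' take_replicate)
  then have "(p + 1) * ones (take i (a @ zs (Suc c))) \<le> i" for i
    using assms unfolding mem_Cw_iff by (meson le_trans mult_le_mono2)
  moreover have "length (a @ zs (Suc c)) = m" "ones (a @ zs (Suc c)) = k - 1"
    using assms by (auto simp: Cw_def)
  ultimately show ?thesis
    unfolding mem_Cw_iff by blast
qed

lemma Cw_weight_1_gen_word: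
  assumes "w \<in> Cw m p 1"
  shows "gen_word p m 1 w"
proof -
  have "True \<notin> set w \<Longrightarrow> ones w = 0"
    by (induct w) auto
  then obtain a c where w: "w = a @ [True] @ zs c"
    using assms last_True_decomp by (fastforce simp: Cw_def)
  then have "a = zs (length a)"
    using assms by (simp add: Cw_def ones_eq_0_iff)
  then have "w = tail_ones (Suc (length a)) 1 @ zs c"
    using w by (simp add: tail_ones_def)
  moreover have "p + 1 \<le> Suc (length a)"
    using Cw_last_True_position assms w by fastforce
  moreover have "Suc (length a) + c = m"
    using assms w by (simp add: Cw_def)
  ultimately show ?thesis
    using gen_word_tail_ones_zs[of p 1 "Suc (length a)" c] by simp
qed

lemma gen_word_tight_pattern:
  assumes "0 < p" "0 < k"
  shows "gen_word p ((p + 1) * k) k (zs (p * k - 1) @ os (k - 1) @ [False, True])"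
proof -
  obtain k1 where k: "k = Suc k1"
    using assms by (cases k) auto
  define q where "q = p * k - 1"
  have le: "(p + 1) * k1 \<le> q + k1"
    using assms(1) unfolding q_def k by (simp add: algebra_simps)
  have "gen_word p (Suc (q + k1)) k1 (tail_ones (q + k1) k1 @ [False])"
    using gen_word_tail_ones_zs[OF le, of 1] by simp
  moreover have "Suc (Suc (q + k1)) = (p + 1) * Suc k1"
    using assms(1) unfolding q_def k by (simp add: algebra_simps)
  ultimately have "gen_word p ((p + 1) * k) k ((tail_ones (q + k1) k1 @ [False]) @ [True])"
    unfolding k by (metis gen_word.snoc_True)
  then show ?thesis
    unfolding q_def k by (simp add: tail_ones_def)
qed

subsection \<open>The last word of the greedy list started at \<open>tail_ones\<close>\<close>

definition greedy_end :: "nat \<Rightarrow> nat \<Rightarrow> nat \<Rightarrow> bool list" where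
  "greedy_end p m k =
     (if k = 0 then zs m
      else if p = 0 then
        (if even k then os k @ zs (m - k) else if m = k then os k else zs (m - 1 - k) @ os k @ [False])
      else if even k then zs (p * k - 1) @ os (k - 1) @ [False, True] @ zs (m - (p + 1) * k)
      else if m = (p + 1) * k then
        (if k = 1 then zs p @ [True] else zs (p * (k - 1) - 1) @ os (k - 2) @ [False, True] @ zs p @ [True])
      else zs (m - 1 - k) @ os k @ [False])"

lemma zs_os_zs_delete_last_True:
  assumes "0 < k" "(p + 1) * (k - 1) \<le> x + (k - 1)" "x + k + c = m"
  shows "\<exists>a c'. zs x @ os k @ zs c = a @ [True] @ zs c' \<and> gen_word p m (k - 1) (a @ zs (Suc c'))"
proof (intro exI conjI)
  show "zs x @ os k @ zs c = (zs x @ os (k - 1)) @ [True] @ zs c"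
    using assms(1) by (cases k) (simp_all add: replicate_append_same)
  show "gen_word p m (k - 1) ((zs x @ os (k - 1)) @ zs (Suc c))"
    using gen_word_tail_ones_zs[OF assms(2), of "Suc c"] assms by (simp add: tail_ones_def)
qed

lemma greedy_end_delete_last_True_single_run:
  assumes "0 < k" "(p + 1) * k \<le> m" "p = 0 \<or> odd k \<and> m \<noteq> (p + 1) * k"
  shows "\<exists>a c. greedy_end p m k = a @ [True] @ zs c \<and> gen_word p m (k - 1) (a @ zs (Suc c))"
proof -
  consider "p = 0" "even k" | "p = 0" "odd k" "m = k" | "odd k" "m \<noteq> (p + 1) * k"
    using assms(3) by (cases "m = k"; cases "even k") auto
  then show ?thesis
  proof cases
    case 1
    then show ?thesis
      using zs_os_zs_delete_last_True[of k p 0 "m - k" m] assms by (simp add: greedy_end_def)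
  next
    case 2
    then show ?thesis
      using zs_os_zs_delete_last_True[of k p 0 0 m] assms by (simp add: greedy_end_def)
  next
    case 3
    then have "(p + 1) * (k - 1) \<le> m - 1 - k + (k - 1)" "m - 1 - k + k + 1 = m"
      using assms by (auto simp: algebra_simps)
    then show ?thesis
      using zs_os_zs_delete_last_True[of k p "m - 1 - k" 1 m] 3 assms
      by (cases "p = 0") (simp_all add: greedy_end_def)
  qed
qed

lemma greedy_end_delete_last_True_blocks:
  assumes "Suc k1 = k" "(p + 1) * k \<le> m" "0 < p" "even k \<or> m = (p + 1) * k"
  shows "\<exists>a c. greedy_end p m k = a @ [True] @ zs c \<and> gen_word p m k1 (a @ zs (Suc c))"
proof -
  have k: "k = Suc k1" and p: "0 < p"
    using assms by simp_all
  consider "even k" | "odd k" "k1 = 0" "m = p + 1" | "odd k" "0 < k1" "m = (p + 1) * k"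
    using assms(1,4) by (cases "k1 = 0") auto
  then show ?thesis
  proof cases
    case 1
    define c where "c = m - (p + 1) * k"
    have "gen_word p m k1 (tail_ones (p * k - 1 + k1) k1 @ zs (Suc (Suc c)))"
      using gen_word_tail_ones_zs[of p k1 "p * k - 1 + k1" "Suc (Suc c)"] p assms(2)
      unfolding c_def k by (simp add: algebra_simps)
    then show ?thesis
      using 1 p k
      by (intro exI[of _ "zs (p * k - 1) @ os k1 @ [False]"] exI[of _ c])
        (simp add: greedy_end_def tail_ones_def c_def)
  next
    case 2
    then show ?thesis
      using p k gen_word_weight_0[of p m "zs m"]
      by (intro exI[of _ "zs p"] exI[of _ 0]) (simp add: greedy_end_def replicate_append_same)
  next
    case 3
    define a where "a = zs (p * k1 - 1) @ os (k1 - 1) @ [False, True]"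
    have "gen_word p ((p + 1) * k1 + Suc p) k1 (a @ zs (Suc p))"
      unfolding a_def using gen_word_tight_pattern[OF assms(3) 3(2)] by (rule gen_word_append_zs) simp
    moreover have "(p + 1) * k1 + Suc p = m"
      using 3 k by (simp add: algebra_simps)
    ultimately have "gen_word p m k1 (a @ zs (Suc p))"
      by simp
    then show ?thesis
      using 3 p k
      by (intro exI[of _ "a @ zs p"] exI[of _ 0]) (simp add: greedy_end_def a_def replicate_append_same)
  qed
qed

lemma greedy_end_delete_last_True:
  assumes "0 < k" "(p + 1) * k \<le> m"
  shows "\<exists>a c. greedy_end p m k = a @ [True] @ zs c \<and> gen_word p m (k - 1) (a @ zs (Suc c))"
proof (cases "p = 0 \<or> odd k \<and> m \<noteq> (p + 1) * k")
  case False
  then show ?thesis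
    using greedy_end_delete_last_True_blocks[of "k - 1" k p m] assms by auto
qed (rule greedy_end_delete_last_True_single_run[OF assms])

lemma greedy_end_tight:
  assumes "0 < k" "Suc m = (p + 1) * k"
  shows "greedy_end p (Suc m) k = greedy_end p m (k - 1) @ [True]"
proof -
  obtain k1 where k: "k = Suc k1"
    using assms(1) by (cases k) auto
  consider "k1 = 0" | "0 < k1" "p = 0" | "0 < k1" "0 < p" "even k" | "0 < k1" "0 < p" "odd k"
    by auto
  then show ?thesis
  proof cases
    case 1
    then show ?thesis
      using assms k by (simp add: greedy_end_def)
  next
    case 2
    then show ?thesis
      using assms k by (simp add: greedy_end_def replicate_append_same)
  next
    case 3
    moreover have "m - 1 - k1 = p * k - 1" "m \<noteq> (p + 1) * k1"
      using assms k 3 by (simp_all add: algebra_simps)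
    ultimately show ?thesis
      using assms k by (simp add: greedy_end_def)
  next
    case 4
    moreover have "m - (p + 1) * k1 = p" "p * (k - 1) = p * k1"
      using assms k by (simp_all add: algebra_simps)
    ultimately show ?thesis
      using assms k by (simp add: greedy_end_def)
  qed
qed

lemma set_zs_at:
  assumes "d < c"
  shows "(a @ zs c)[length a + d := True] = a @ zs d @ [True] @ zs (c - d - 1)"
proof -
  have "c = d + Suc (c - d - 1)"
    using assms by simp
  then have "zs c = zs d @ False # zs (c - d - 1)"
    by (metis replicate_add replicate_Suc)
  then show ?thesis
    by (simp add: list_update_append)
qed

text \<open>In the non-tight case the greedy list started at \<open>tail_ones (Suc m) k\<close> first exhausts
  the words ending in 1 and reaches \<open>greedy_end p m (k - 1) @ [True] = a @ zs c @ [True]\<close>,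
  where \<open>zs c\<close> are the trailing zeros. The next step moves the final 1 to the leftmost 0 of
  \<open>zs c\<close> that keeps the prefix condition, at position \<open>max (length a) ((p + 1) * k - 1)\<close>,
  and reaches \<open>x @ [False]\<close>.\<close>

definition greedy_end_crossing :: "nat \<Rightarrow> nat \<Rightarrow> nat \<Rightarrow> bool list \<Rightarrow> nat \<Rightarrow> bool" where
  "greedy_end_crossing p m k a c \<longleftrightarrow>
     (let j = max (length a) ((p + 1) * k - 1); x = (a @ zs c)[j := True] in
      greedy_end p m (k - 1) = a @ zs c \<and> (a = [] \<or> last a) \<and> j < length a + c \<and>
      gen_word p m k x \<and>
      greedy_end p (Suc m) k = (if x = tail_ones m k then greedy_end p m k else tail_ones m k) @ [False])"

lemma tail_ones_ne_append: "True \<in> set u \<Longrightarrow> False \<in> set v \<Longrightarrow> tail_ones n k \<noteq> u @ v"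
  using sorted_tail_ones[of n k] by (auto simp: sorted_append)

lemma greedy_end_crossing_weight_1:
  assumes "p + 1 \<le> m"
  shows "greedy_end_crossing p m 1 [] m"
proof -
  have x: "(zs m)[p := True] = zs p @ [True] @ zs (m - p - 1)"
    using set_zs_at[of p m "[]"] assms by simp
  have "gen_word p m 1 (zs p @ [True] @ zs (m - p - 1))"
    using gen_word_tail_ones_zs[of p 1 "p + 1" "m - p - 1"] assms by (simp add: tail_ones_def)
  moreover have "greedy_end p (Suc m) 1 =
      (if zs p @ [True] @ zs (m - p - 1) = tail_ones m 1 then greedy_end p m 1 else tail_ones m 1) @ [False]"
  proof (cases "m = p + 1")
    case False
    have "tail_ones m 1 \<noteq> (zs p @ [True]) @ zs (m - p - 1)"
      by (rule tail_ones_ne_append) (use False assms in auto)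
    then have "zs p @ [True] @ zs (m - p - 1) \<noteq> tail_ones m 1"
      by simp
    then show ?thesis
      using assms by (simp add: greedy_end_def tail_ones_def)
  qed (simp add: greedy_end_def tail_ones_def)
  ultimately show ?thesis
    using assms x by (simp add: greedy_end_crossing_def greedy_end_def)
qed

lemma greedy_end_crossing_even:
  assumes "even k" "0 < k" "(p + 1) * k \<le> m"
  shows "greedy_end_crossing p m k (zs (m - k) @ os (k - 1)) 1"
proof -
  let ?a = "zs (m - k) @ os (k - 1)"
  have k: "odd (k - 1)" "0 < k - 1" "k \<le> m" "m \<noteq> k - 1" "m \<noteq> (p + 1) * (k - 1)"
    using assms by (auto simp: algebra_simps)
  have end_k1: "greedy_end p m (k - 1) = ?a @ zs 1"
    using k by (simp add: greedy_end_def)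
  have j: "max (length ?a) ((p + 1) * k - 1) = length ?a + 0"
    using assms k by simp
  have x: "(?a @ zs 1)[length ?a + 0 := True] = tail_ones m k"
    using set_zs_at[of 0 1 ?a] k
    by (cases k) (simp_all add: tail_ones_def replicate_append_same)
  have "Suc m - (p + 1) * k = Suc (m - (p + 1) * k)" "Suc m - k = Suc (m - k)"
    using assms by auto
  then have "greedy_end p (Suc m) k = greedy_end p m k @ [False]"
    using assms by (simp add: greedy_end_def replicate_append_same)
  then show ?thesis
    using end_k1 j x k gen_word.tail[OF assms(3)]
    unfolding greedy_end_crossing_def Let_def by simp
qed

lemma greedy_end_crossing_odd_p0:
  assumes "odd k" "1 < k" "k \<le> m"
  shows "greedy_end_crossing 0 m k (os (k - 1)) (m - (k - 1))"
proof -
  have x: "(os (k - 1) @ zs (m - (k - 1)))[length (os (k - 1)) + 0 := True] = os k @ zs (m - k)"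
    using set_zs_at[of 0 "m - (k - 1)" "os (k - 1)"] assms
    by (cases k) (simp_all add: replicate_append_same)
  have gen: "gen_word 0 m k (os k @ zs (m - k))"
    using gen_word_tail_ones_zs[of 0 k k "m - k"] assms by (simp add: tail_ones_def)
  have "os k @ zs (m - k) = tail_ones m k \<longleftrightarrow> m = k"
  proof
    show "os k @ zs (m - k) = tail_ones m k \<Longrightarrow> m = k"
      using tail_ones_ne_append[of "os k" "zs (m - k)" m k] assms by (cases "m = k") auto
  qed (simp add: tail_ones_def)
  then have "greedy_end 0 (Suc m) k =
      (if os k @ zs (m - k) = tail_ones m k then greedy_end 0 m k else tail_ones m k) @ [False]"
    using assms by (auto simp: greedy_end_def tail_ones_def)
  then show ?thesis
    using assms x gen unfolding greedy_end_crossing_def Let_def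
    by (simp add: greedy_end_def)
qed

lemma greedy_end_crossing_odd:
  assumes "0 < p" "odd k" "1 < k" "(p + 1) * k \<le> m"
  shows "greedy_end_crossing p m k (zs (p * (k - 1) - 1) @ os (k - 2) @ [False, True])
           (m - (p + 1) * (k - 1))"
proof -
  define a where "a = zs (p * (k - 1) - 1) @ os (k - 2) @ [False, True]"
  define c where "c = m - (p + 1) * (k - 1)"
  have len_a: "length a = (p + 1) * (k - 1)"
    using assms unfolding a_def by (cases k) (auto simp: algebra_simps)
  have pk: "(p + 1) * k = (p + 1) * (k - 1) + p + 1"
    using assms by (cases k) simp_all
  then have j: "max (length a) ((p + 1) * k - 1) = length a + p" "p < c"
    using assms len_a unfolding c_def by linarith+
  have x: "(a @ zs c)[length a + p := True] = a @ zs p @ [True] @ zs (m - (p + 1) * k)"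
    using set_zs_at[OF j(2), of a] pk unfolding c_def by (simp add: diff_diff_add)
  have "gen_word p ((p + 1) * (k - 1) + p) (k - 1) (a @ zs p)"
    using gen_word_append_zs[OF gen_word_tight_pattern[of p "k - 1"]] assms
    unfolding a_def by (simp add: numeral_2_eq_2)
  then have "gen_word p (Suc ((p + 1) * (k - 1) + p)) (Suc (k - 1)) ((a @ zs p) @ [True])"
    by (rule gen_word.snoc_True) (use pk assms in simp)
  then have "gen_word p ((p + 1) * k) k ((a @ zs p) @ [True])"
    unfolding pk using assms by (simp add: add.assoc)
  then have "gen_word p ((p + 1) * k + (m - (p + 1) * k)) k
      (((a @ zs p) @ [True]) @ zs (m - (p + 1) * k))"
    by (rule gen_word_append_zs) simp
  then have gen: "gen_word p m k (a @ zs p @ [True] @ zs (m - (p + 1) * k))"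
    using assms(4) by simp
  have ne: "tail_ones m k \<noteq> a @ zs p @ [True] @ zs (m - (p + 1) * k)"
    using assms by (intro tail_ones_ne_append) (auto simp: a_def)
  have end_Suc: "greedy_end p (Suc m) k = tail_ones m k @ [False]"
    using assms by (simp add: greedy_end_def tail_ones_def)
  have "even (k - 1)" "k - 1 \<noteq> 0"
    using assms by auto
  then have end_k1: "greedy_end p m (k - 1) = a @ zs c"
    using assms by (simp add: greedy_end_def a_def c_def numeral_2_eq_2)
  show ?thesis
    unfolding a_def[symmetric] c_def[symmetric] greedy_end_crossing_def Let_def j(1)
    using end_k1 j(2) x gen ne end_Suc by (simp add: a_def)
qed

lemma greedy_end_crossing_exists:
  assumes "0 < k" "(p + 1) * k \<le> m"
  obtains a c where "greedy_end_crossing p m k a c"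
proof -
  consider "k = 1" | "even k" | "odd k" "1 < k" "p = 0" | "odd k" "1 < k" "0 < p"
    using assms(1) by (metis odd_one less_one linorder_neqE_nat not_gr_zero)
  then show thesis
  proof cases
    case 1
    then show thesis
      using greedy_end_crossing_weight_1 assms that by force
  next
    case 2
    then show thesis
      using greedy_end_crossing_even assms that by blast
  next
    case 3
    then show thesis
      using greedy_end_crossing_odd_p0 assms that by force
  next
    case 4
    then show thesis
      using greedy_end_crossing_odd assms that by blast
  qed
qed

subsection \<open>The greedy list on \<open>C_n(p, k)\<close>\<close>

lemma Cw_half_False: "{u. u @ [False] \<in> Cw (Suc m) p k} = Cw m p k"
  by (auto simp: snoc_False_in_Cw)

lemma Cw_half_True: "0 < k \<Longrightarrow> (p + 1) * k \<le> Suc m \<Longrightarrow> {u. u @ [True] \<in> Cw (Suc m) p k} = Cw m p (k - 1)"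
  using snoc_True_in_Cw[of _ m p "k - 1"] by auto

lemma Cw_subset_snoc_image_iff:
  assumes "0 < k" "(p + 1) * k \<le> Suc m"
  shows "Cw (Suc m) p k \<subseteq> (\<lambda>u. u @ [False]) ` X \<union> (\<lambda>u. u @ [True]) ` Y \<longleftrightarrow>
           Cw m p k \<subseteq> X \<and> Cw m p (k - 1) \<subseteq> Y"
  by (rule subset_snoc_image_iff)
    (use Cw_half_False Cw_half_True[OF assms] Cw_Suc_nonempty in blast)+

lemma greedy_step_Cw_snoc_True_cross:
  assumes none: "greedy_step {u. u @ [True] \<in> Cw (Suc m) p k} {u. u @ [True] \<in> V} (a @ zs c) = None"
    and last_a: "a = [] \<or> last a"
    and j0: "j0 = max (length a) ((p + 1) * k - 1)" "j0 < length a + c"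
    and x: "(a @ zs c)[j0 := True] \<in> Cw m p k"
    and V: "\<forall>u. u @ [False] \<notin> V"
  shows "greedy_step (Cw (Suc m) p k) V ((a @ zs c) @ [True]) = Some ((a @ zs c)[j0 := True] @ [False])"
proof (rule greedy_step_snoc_True_cross[OF none])
  let ?w = "a @ zs c"
  show "homog_transp (?w @ [True]) (length ?w) j0"
    unfolding homog_transp_def using j0 by (auto simp: nth_append)
  show "?w[j0 := True] @ [False] \<in> Cw (Suc m) p k"
    using x by (simp add: snoc_False_in_Cw)
  show "?w[j0 := True] @ [False] \<notin> V"
    using V by simp
  fix j assume "j < j0" and h: "homog_transp (?w @ [True]) (length ?w) j"
  note j = homog_transp_from_last_True[OF h]
  have "length a \<le> j"
  proof (rule ccontr)
    assume "\<not> length a \<le> j"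
    then have "a \<noteq> []"
      by auto
    then have "?w ! (length a - 1)"
      using last_a by (simp add: nth_append last_conv_nth)
    then show False
      using j \<open>\<not> length a \<le> j\<close> by (cases "j = length a - 1") auto
  qed
  then obtain d where "j = length a + d"
    using le_Suc_ex by blast
  with j(1) have d: "j = length a + d" "d < c"
    by simp_all
  have "\<not> (p + 1) * k \<le> Suc (length (a @ zs d))"
    using \<open>j < j0\<close> \<open>length a \<le> j\<close> d j0(1) by auto
  then have "?w[j := True] \<notin> Cw m p k"
    using Cw_last_True_position set_zs_at[OF d(2), of a] d(1) by (metis append_assoc)
  then show "?w[j := True] @ [False] \<notin> Cw (Suc m) p k \<or> ?w[j := True] @ [False] \<in> V"
    by (simp add: snoc_False_in_Cw)
qed

definition greedy_spec :: "nat \<Rightarrow> nat \<Rightarrow> nat \<Rightarrow> bool list \<Rightarrow> bool" where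
  "greedy_spec p n k \<alpha> \<longleftrightarrow>
     (Cw n p k \<subseteq> set (greedy (Cw n p k) \<alpha>) \<longleftrightarrow> gen_word p n k \<alpha>) \<and>
     last (greedy (Cw n p k) \<alpha>) = (if \<alpha> = tail_ones n k then greedy_end p n k else tail_ones n k)"

lemma greedy_spec_weight_0:
  assumes "\<alpha> \<in> Cw n p 0"
  shows "greedy_spec p n 0 \<alpha>"
proof -
  have \<alpha>: "\<alpha> = zs n"
    using assms Cw_weight_0 by blast
  then have "greedy_next (Cw n p 0) [\<alpha>] = None"
    using Cw_weight_0 by (auto simp: greedy_next_eq_step greedy_step_None_iff moves_def)
  then have "greedy (Cw n p 0) \<alpha> = [\<alpha>]"
    using greedy_eqI[OF finite_Cw assms greedy_run.stop] by blast
  then show ?thesis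
    using \<alpha> Cw_weight_0 gen_word_weight_0
    by (simp add: greedy_spec_def tail_ones_def greedy_end_def)
qed

lemma greedy_last_decomp:
  assumes spec: "greedy_spec p m k \<beta>" and \<beta>: "\<beta> \<in> Cw m p k" and k: "0 < k"
  obtains a c where "last (greedy (Cw m p k) \<beta>) = a @ [True] @ zs c"
    and "gen_word p m k \<beta> \<Longrightarrow> gen_word p m (k - 1) (a @ zs (Suc c))"
proof (cases "\<beta> = tail_ones m k")
  case True
  then show thesis
    using spec greedy_end_delete_last_True[OF k Cw_weight_bound[OF \<beta>]] that
    by (auto simp: greedy_spec_def)
next
  case False
  have km: "(p + 1) * k \<le> m"
    using Cw_weight_bound[OF \<beta>] .
  then have "(p + 1) * (k - 1) \<le> m - 1"
    using k by (cases k) (auto simp: algebra_simps)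
  then have "gen_word p (m - 1 + 1) (k - 1) (tail_ones (m - 1) (k - 1) @ zs 1)"
    by (rule gen_word_tail_ones_zs)
  moreover have "m - 1 + 1 = m" "m - 1 - (k - 1) = m - k"
    using km k by (auto simp: algebra_simps)
  moreover have "tail_ones m k = (zs (m - k) @ os (k - 1)) @ [True] @ zs 0"
    using k by (cases k) (simp_all add: tail_ones_def replicate_append_same)
  ultimately show thesis
    using that[of "zs (m - k) @ os (k - 1)" 0] spec False by (simp add: greedy_spec_def tail_ones_def)
qed

lemma greedy_last_from_snoc_False:
  assumes "greedy_spec p m k (w @ [False])"
  shows "last (greedy (Cw m p k) (w @ [False])) = tail_ones m k"
proof (cases "w @ [False] = tail_ones m k")
  case True
  then have "k = 0"
    using tail_ones_ne_snoc_False[of k m w] by (cases k) auto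
  then show ?thesis
    using assms by (simp add: greedy_spec_def greedy_end_def tail_ones_def)
qed (use assms in \<open>simp add: greedy_spec_def\<close>)

lemma greedy_Cw_snoc_False:
  assumes k: "0 < k" and \<beta>: "\<beta> \<in> Cw m p k"
    and last0: "last (greedy (Cw m p k) \<beta>) = a @ [True] @ zs c"
    and u: "a @ zs (Suc c) \<in> Cw m p (k - 1)"
    and last1: "last (greedy (Cw m p (k - 1)) (a @ zs (Suc c))) = tail_ones m (k - 1)"
    and weight_1: "k = 1 \<Longrightarrow> Cw m p k \<subseteq> set (greedy (Cw m p k) \<beta>)"
  shows "greedy (Cw (Suc m) p k) (\<beta> @ [False]) =
           map (\<lambda>u. u @ [False]) (greedy (Cw m p k) \<beta>) @
           map (\<lambda>u. u @ [True]) (greedy (Cw m p (k - 1)) (a @ zs (Suc c)))"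
proof -
  let ?S = "Cw (Suc m) p k"
  define R0 where "R0 = greedy (Cw m p k) \<beta>"
  define R1 where "R1 = greedy (Cw m p (k - 1)) (a @ zs (Suc c))"
  have km: "(p + 1) * k \<le> Suc m"
    using Cw_weight_bound[OF \<beta>] by simp
  have run0: "greedy_run {u. u @ [False] \<in> ?S} [\<beta>] R0"
    unfolding R0_def Cw_half_False by (rule greedy_run_greedy[OF finite_Cw \<beta>])
  have run1: "greedy_run {u. u @ [True] \<in> ?S} [a @ zs (Suc c)] R1"
    unfolding R1_def Cw_half_True[OF k km] by (rule greedy_run_greedy[OF finite_Cw u])
  have "greedy_run ?S (map (\<lambda>u. u @ [False]) R0 @ [(a @ zs (Suc c)) @ [True]])
      (map (\<lambda>u. u @ [False]) R0 @ map (\<lambda>u. u @ [True]) R1)"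
  proof (rule greedy_run_final_phase_True[OF run1])
    fix j assume h: "homog_transp (last R1 @ [True]) (length (last R1)) j"
    show "(last R1)[j := True] @ [False] \<notin> ?S \<or>
        (last R1)[j := True] @ [False] \<in> set (map (\<lambda>u. u @ [False]) R0)"
    proof (cases "k = 1")
      case False
      then show ?thesis
        using h last1 k km no_homog_transp_after_True[of "last R1" j]
        by (auto simp: R1_def tail_ones_def)
    qed (use weight_1 in \<open>auto simp: R0_def snoc_False_in_Cw\<close>)
  qed auto
  moreover have "greedy_next ?S (map (\<lambda>u. u @ [False]) R0) = Some ((a @ zs (Suc c)) @ [True])"
    using greedy_next_cross_to_True[OF run0 last0[folded R0_def]] u Cw_half_True[OF k km] by blast
  ultimately have "greedy_run ?S ([] @ [\<beta> @ [False]]) (map (\<lambda>u. u @ [False]) R0 @ map (\<lambda>u. u @ [True]) R1)"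
    by (intro greedy_run_snoc_lift[OF run0]) (auto intro: greedy_run.step)
  then show ?thesis
    unfolding R0_def R1_def using \<beta> by (intro greedy_eqI[OF finite_Cw]) (auto simp: snoc_False_in_Cw)
qed

lemma greedy_spec_snoc_False:
  assumes IH: "\<And>k \<gamma>. \<gamma> \<in> Cw m p k \<Longrightarrow> greedy_spec p m k \<gamma>"
    and k: "0 < k" and \<beta>: "\<beta> \<in> Cw m p k"
  shows "greedy_spec p (Suc m) k (\<beta> @ [False])"
proof -
  obtain a c where last0: "last (greedy (Cw m p k) \<beta>) = a @ [True] @ zs c"
    and gen_u: "gen_word p m k \<beta> \<Longrightarrow> gen_word p m (k - 1) (a @ zs (Suc c))"
    using greedy_last_decomp[OF IH[OF \<beta>] \<beta> k] by blast
  define u where "u = a @ zs (Suc c)"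
  have km: "(p + 1) * k \<le> m"
    using Cw_weight_bound[OF \<beta>] .
  have u: "u \<in> Cw m p (k - 1)"
    unfolding u_def using Cw_delete_last_True last0 greedy_run_last_in greedy_run_greedy finite_Cw \<beta>
    by metis
  have u_snoc: "u = (a @ zs c) @ [False]"
    by (simp add: u_def replicate_append_same)
  have last1: "last (greedy (Cw m p (k - 1)) u) = tail_ones m (k - 1)"
    using greedy_last_from_snoc_False[OF IH[OF u, unfolded u_snoc]] unfolding u_snoc .
  have "k = 1 \<Longrightarrow> Cw m p k \<subseteq> set (greedy (Cw m p k) \<beta>)"
    using IH[OF \<beta>] Cw_weight_1_gen_word \<beta> by (simp add: greedy_spec_def)
  note list = greedy_Cw_snoc_False[OF k \<beta> last0 u[unfolded u_def] last1[unfolded u_def] this, folded u_def]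
  have "Cw (Suc m) p k \<subseteq> set (greedy (Cw (Suc m) p k) (\<beta> @ [False])) \<longleftrightarrow>
      Cw m p k \<subseteq> set (greedy (Cw m p k) \<beta>) \<and> Cw m p (k - 1) \<subseteq> set (greedy (Cw m p (k - 1)) u)"
    using Cw_subset_snoc_image_iff[OF k, of p m] km by (simp add: list)
  also have "\<dots> \<longleftrightarrow> gen_word p (Suc m) k (\<beta> @ [False])"
    using IH[OF \<beta>] IH[OF u] gen_u gen_word_snoc_False_iff[OF k] km
    by (auto simp: greedy_spec_def u_def)
  finally have cover: "Cw (Suc m) p k \<subseteq> set (greedy (Cw (Suc m) p k) (\<beta> @ [False])) \<longleftrightarrow>
      gen_word p (Suc m) k (\<beta> @ [False])" .
  have "greedy (Cw m p (k - 1)) u \<noteq> []"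
    using greedy_run_last_in[OF greedy_run_greedy[OF finite_Cw u] u] by simp
  then have "last (greedy (Cw (Suc m) p k) (\<beta> @ [False])) = tail_ones (Suc m) k"
    using last1 tail_ones_snoc_True[of "k - 1" m] k km by (simp add: list last_map)
  moreover have "\<beta> @ [False] \<noteq> tail_ones (Suc m) k"
    using tail_ones_ne_snoc_False[OF k] by metis
  ultimately show ?thesis
    using cover by (simp add: greedy_spec_def)
qed

lemma greedy_Cw_snoc_True_stop:
  assumes k: "0 < k" "(p + 1) * k \<le> Suc m" and \<beta>: "\<beta> \<in> Cw m p (k - 1)"
    and stuck: "\<And>j. homog_transp (last (greedy (Cw m p (k - 1)) \<beta>) @ [True])
                       (length (last (greedy (Cw m p (k - 1)) \<beta>))) j \<Longrightarrow>
                     (last (greedy (Cw m p (k - 1)) \<beta>))[j := True] \<notin> Cw m p k"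
  shows "greedy (Cw (Suc m) p k) (\<beta> @ [True]) = map (\<lambda>u. u @ [True]) (greedy (Cw m p (k - 1)) \<beta>)"
proof -
  have run1: "greedy_run {u. u @ [True] \<in> Cw (Suc m) p k} [\<beta>] (greedy (Cw m p (k - 1)) \<beta>)"
    unfolding Cw_half_True[OF k] by (rule greedy_run_greedy[OF finite_Cw \<beta>])
  have "greedy_run (Cw (Suc m) p k) ([] @ [\<beta> @ [True]]) ([] @ map (\<lambda>u. u @ [True]) (greedy (Cw m p (k - 1)) \<beta>))"
    by (rule greedy_run_final_phase_True[OF run1]) (use stuck in \<open>auto simp: snoc_False_in_Cw\<close>)
  moreover have "\<beta> @ [True] \<in> Cw (Suc m) p k"
    using Cw_half_True[OF k] \<beta> by blast
  ultimately show ?thesis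
    using greedy_eqI[OF finite_Cw] by simp
qed

lemma greedy_Cw_snoc_True_cross:
  assumes IH: "\<And>k \<gamma>. \<gamma> \<in> Cw m p k \<Longrightarrow> greedy_spec p m k \<gamma>"
    and k: "0 < k" and km: "(p + 1) * k \<le> m" and cross: "greedy_end_crossing p m k a c"
    and x: "x = (a @ zs c)[max (length a) ((p + 1) * k - 1) := True]"
  shows "greedy (Cw (Suc m) p k) (tail_ones m (k - 1) @ [True]) =
           map (\<lambda>u. u @ [True]) (greedy (Cw m p (k - 1)) (tail_ones m (k - 1))) @
           map (\<lambda>u. u @ [False]) (greedy (Cw m p k) x)"
proof -
  let ?S = "Cw (Suc m) p k" and ?A = "Cw m p k" and ?B = "Cw m p (k - 1)"
  define \<beta> where "\<beta> = tail_ones m (k - 1)"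
  define R1 where "R1 = greedy ?B \<beta>"
  define R0 where "R0 = greedy ?A x"
  have km': "(p + 1) * k \<le> Suc m"
    using km by simp
  have "(p + 1) * (k - 1) \<le> m"
    using km by (meson diff_le_self le_trans mult_le_mono2)
  then have gen_\<beta>: "gen_word p m (k - 1) \<beta>"
    unfolding \<beta>_def by (rule gen_word.tail)
  then have \<beta>: "\<beta> \<in> ?B"
    by (rule gen_word_in_Cw)
  have cover1: "?B \<subseteq> set R1" and last1: "last R1 = a @ zs c"
    using IH[OF \<beta>] gen_\<beta> cross
    by (simp_all add: greedy_spec_def greedy_end_crossing_def Let_def R1_def \<beta>_def)
  have gen_x: "gen_word p m k x"
    using cross by (simp add: greedy_end_crossing_def Let_def x)
  have run1: "greedy_run {u. u @ [True] \<in> ?S} [\<beta>] R1"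
    unfolding R1_def Cw_half_True[OF k km'] by (rule greedy_run_greedy[OF finite_Cw \<beta>])
  have run0: "greedy_run {u. u @ [False] \<in> ?S} [x] R0"
    unfolding R0_def Cw_half_False by (rule greedy_run_greedy[OF finite_Cw gen_word_in_Cw[OF gen_x]])
  note final1 = greedy_run_snoc_final[OF run1, of "[]", simplified]
  have "greedy_step ?S (set (map (\<lambda>u. u @ [True]) R1)) ((a @ zs c) @ [True]) = Some (x @ [False])"
    unfolding x
  proof (rule greedy_step_Cw_snoc_True_cross)
    show "greedy_step {u. u @ [True] \<in> ?S} {u. u @ [True] \<in> set (map (\<lambda>u. u @ [True]) R1)} (a @ zs c) = None"
      using final1(1) last1 by simp
  qed (use cross gen_x x gen_word_in_Cw in \<open>auto simp: greedy_end_crossing_def Let_def\<close>)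
  then have "greedy_next ?S (map (\<lambda>u. u @ [True]) R1) = Some (x @ [False])"
    using final1(2) last1 by (simp add: greedy_next_eq_step)
  moreover have "greedy_run ?S (map (\<lambda>u. u @ [True]) R1 @ [x @ [False]])
      (map (\<lambda>u. u @ [True]) R1 @ map (\<lambda>u. u @ [False]) R0)"
    by (rule greedy_run_final_phase_False[OF run0]) (use cover1 Cw_half_True[OF k km'] in auto)
  ultimately have "greedy_run ?S ([] @ [\<beta> @ [True]]) (map (\<lambda>u. u @ [True]) R1 @ map (\<lambda>u. u @ [False]) R0)"
    by (intro greedy_run_snoc_lift[OF run1]) (auto intro: greedy_run.step)
  moreover have "\<beta> @ [True] \<in> ?S"
    using Cw_half_True[OF k km'] \<beta> by blast
  ultimately show ?thesis
    unfolding R0_def R1_def \<beta>_def using greedy_eqI[OF finite_Cw] by simp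
qed

lemma greedy_spec_snoc_True_not_tail:
  assumes IH: "\<And>k \<gamma>. \<gamma> \<in> Cw m p k \<Longrightarrow> greedy_spec p m k \<gamma>"
    and k: "0 < k" "(p + 1) * k \<le> Suc m" and \<beta>: "\<beta> \<in> Cw m p (k - 1)"
    and not_tail: "\<beta> \<noteq> tail_ones m (k - 1)"
  shows "greedy_spec p (Suc m) k (\<beta> @ [True])"
proof -
  define R1 where "R1 = greedy (Cw m p (k - 1)) \<beta>"
  have "k - 1 \<noteq> 0"
    using \<beta> not_tail Cw_weight_0 by (auto simp: tail_ones_def)
  moreover have last1: "last R1 = tail_ones m (k - 1)"
    using IH[OF \<beta>] not_tail by (simp add: greedy_spec_def R1_def)
  ultimately have "last R1 \<noteq> []" "last (last R1)"
    by (auto simp: tail_ones_def)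
  then have list: "greedy (Cw (Suc m) p k) (\<beta> @ [True]) = map (\<lambda>u. u @ [True]) R1"
    unfolding R1_def using greedy_Cw_snoc_True_stop[OF k \<beta>] no_homog_transp_after_True
    by (simp add: R1_def)
  have "Cw m p k = {} \<longleftrightarrow> \<not> (p + 1) * k \<le> m"
    using tail_ones_in_Cw Cw_weight_bound by blast
  then have "Cw (Suc m) p k \<subseteq> set (map (\<lambda>u. u @ [True]) R1) \<longleftrightarrow> gen_word p (Suc m) k (\<beta> @ [True])"
    using Cw_subset_snoc_image_iff[OF k, of "{}" "set R1"] IH[OF \<beta>] not_tail k
      gen_word_snoc_True_iff[OF k(1)] tail_ones_snoc_True[of "k - 1" m]
    by (auto simp: greedy_spec_def R1_def)
  moreover have "tail_ones (Suc m) k = tail_ones m (k - 1) @ [True]"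
    using tail_ones_snoc_True[of "k - 1" m] k by (simp add: algebra_simps)
  moreover have "R1 \<noteq> []"
    using greedy_run_last_in[OF greedy_run_greedy[OF finite_Cw \<beta>] \<beta>] by (simp add: R1_def)
  ultimately show ?thesis
    using list last1 not_tail by (simp add: greedy_spec_def last_map)
qed

lemma greedy_spec_snoc_True_tight:
  assumes IH: "\<And>k \<gamma>. \<gamma> \<in> Cw m p k \<Longrightarrow> greedy_spec p m k \<gamma>"
    and k: "0 < k" and tight: "Suc m = (p + 1) * k"
  shows "greedy_spec p (Suc m) k (tail_ones m (k - 1) @ [True])"
proof -
  let ?\<beta> = "tail_ones m (k - 1)"
  define R1 where "R1 = greedy (Cw m p (k - 1)) ?\<beta>"
  have k': "(p + 1) * k \<le> Suc m" "(p + 1) * (k - 1) \<le> m"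
    using k tight by (auto simp: algebra_simps)
  have A: "Cw m p k = {}"
    using Cw_weight_bound tight by fastforce
  have gen: "gen_word p m (k - 1) ?\<beta>"
    using gen_word.tail[OF k'(2)] .
  then have \<beta>: "?\<beta> \<in> Cw m p (k - 1)"
    by (rule gen_word_in_Cw)
  have list: "greedy (Cw (Suc m) p k) (?\<beta> @ [True]) = map (\<lambda>u. u @ [True]) R1"
    unfolding R1_def using greedy_Cw_snoc_True_stop[OF k(1) k'(1) \<beta>] A by simp
  have "Cw (Suc m) p k \<subseteq> set (map (\<lambda>u. u @ [True]) R1)"
    using Cw_subset_snoc_image_iff[OF k(1) k'(1), of "{}" "set R1"] IH[OF \<beta>] gen A
    by (simp add: greedy_spec_def R1_def)
  moreover have "last R1 = greedy_end p m (k - 1)"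
    using IH[OF \<beta>] by (simp add: greedy_spec_def R1_def)
  moreover have "R1 \<noteq> []"
    using greedy_run_last_in[OF greedy_run_greedy[OF finite_Cw \<beta>] \<beta>] by (simp add: R1_def)
  moreover have "?\<beta> @ [True] = tail_ones (Suc m) k"
    using tail_ones_snoc_True[of "k - 1" m] k k' by (simp add: algebra_simps)
  ultimately show ?thesis
    using list gen_word.tail[OF k'(1)] greedy_end_tight[OF k tight]
    by (simp add: greedy_spec_def last_map)
qed

lemma greedy_spec_snoc_True_tail:
  assumes IH: "\<And>k \<gamma>. \<gamma> \<in> Cw m p k \<Longrightarrow> greedy_spec p m k \<gamma>"
    and k: "0 < k" and km: "(p + 1) * k \<le> m"
  shows "greedy_spec p (Suc m) k (tail_ones m (k - 1) @ [True])"
proof -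
  let ?\<beta> = "tail_ones m (k - 1)"
  obtain a c where cross: "greedy_end_crossing p m k a c"
    using greedy_end_crossing_exists[OF k km] .
  define x where "x = (a @ zs c)[max (length a) ((p + 1) * k - 1) := True]"
  define R1 where "R1 = greedy (Cw m p (k - 1)) ?\<beta>"
  define R0 where "R0 = greedy (Cw m p k) x"
  have k': "(p + 1) * k \<le> Suc m" "(p + 1) * (k - 1) \<le> m"
    using km by (auto simp: algebra_simps)
  have gen_\<beta>: "gen_word p m (k - 1) ?\<beta>"
    using gen_word.tail[OF k'(2)] .
  have gen_x: "gen_word p m k x"
    using cross by (simp add: greedy_end_crossing_def Let_def x_def)
  note \<beta> = gen_word_in_Cw[OF gen_\<beta>] and x = gen_word_in_Cw[OF gen_x]
  have list: "greedy (Cw (Suc m) p k) (?\<beta> @ [True]) = map (\<lambda>u. u @ [True]) R1 @ map (\<lambda>u. u @ [False]) R0"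
    unfolding R0_def R1_def by (rule greedy_Cw_snoc_True_cross[OF IH k km cross x_def])
  have "Cw (Suc m) p k \<subseteq> set (map (\<lambda>u. u @ [True]) R1 @ map (\<lambda>u. u @ [False]) R0)"
    using Cw_subset_snoc_image_iff[OF k k'(1), of "set R0" "set R1"] IH[OF \<beta>] IH[OF x] gen_\<beta> gen_x
    by (auto simp: greedy_spec_def R0_def R1_def)
  moreover have "last R0 @ [False] = greedy_end p (Suc m) k"
    using IH[OF x] cross by (simp add: greedy_spec_def R0_def greedy_end_crossing_def Let_def x_def)
  moreover have "R0 \<noteq> []"
    using greedy_run_last_in[OF greedy_run_greedy[OF finite_Cw x] x] by (simp add: R0_def)
  moreover have "?\<beta> @ [True] = tail_ones (Suc m) k"
    using tail_ones_snoc_True[of "k - 1" m] k k' by (simp add: algebra_simps)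
  ultimately show ?thesis
    using list gen_word.tail[OF k'(1)] by (simp add: greedy_spec_def last_map)
qed

lemma greedy_spec_snoc_True:
  assumes IH: "\<And>k \<gamma>. \<gamma> \<in> Cw m p k \<Longrightarrow> greedy_spec p m k \<gamma>"
    and k: "0 < k" and \<alpha>: "\<beta> @ [True] \<in> Cw (Suc m) p k"
  shows "greedy_spec p (Suc m) k (\<beta> @ [True])"
proof -
  have km: "(p + 1) * k \<le> Suc m" and \<beta>: "\<beta> \<in> Cw m p (k - 1)"
    using \<alpha> Cw_weight_bound Cw_half_True[OF k] by blast+
  show ?thesis
  proof (cases "\<beta> = tail_ones m (k - 1)")
    case True
    show ?thesis
    proof (cases "(p + 1) * k \<le> m")
      case False
      then have "Suc m = (p + 1) * k"
        using km by simp
      then show ?thesis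
        using greedy_spec_snoc_True_tight[OF IH k] True by simp
    qed (use greedy_spec_snoc_True_tail[OF IH k] True in simp)
  qed (rule greedy_spec_snoc_True_not_tail[OF IH k km \<beta>])
qed

theorem greedy_spec_Cw: "\<alpha> \<in> Cw n p k \<Longrightarrow> greedy_spec p n k \<alpha>"
proof (induction n arbitrary: k \<alpha>)
  case 0
  then have "k = 0"
    using Cw_weight_bound by fastforce
  then show ?case
    using greedy_spec_weight_0 0 by blast
next
  case (Suc m)
  show ?case
  proof (cases "k = 0")
    case False
    obtain \<beta> b where \<alpha>: "\<alpha> = \<beta> @ [b]"
      using Cw_Suc_nonempty[OF Suc.prems] by (metis rev_exhaust)
    then show ?thesis
      using greedy_spec_snoc_True[OF Suc.IH] greedy_spec_snoc_False[OF Suc.IH] Suc.prems False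
      by (cases b) (auto simp: snoc_False_in_Cw)
  qed (use greedy_spec_weight_0 Suc.prems in blast)
qed

corollary Gen_eq_gen_word: "Gen p n k = {w. gen_word p n k w}"
  unfolding Gen_def Dp_def using greedy_spec_Cw gen_word_in_Cw by (fastforce simp: greedy_spec_def)

subsection \<open>The generators explicitly\<close>

definition block_words :: "nat \<Rightarrow> nat \<Rightarrow> nat \<Rightarrow> bool list set" where
  "block_words p n k = (\<Union>j\<in>{1..k}. {zs (p * j - i) @ os (j - 1) @ zs i @ [True]
                            @ concat (replicate (k - j) (zs p @ [True]))
                            @ zs (n - (p + 1) * k) | i. i \<le> p - 1})"

definition run_words :: "nat \<Rightarrow> nat \<Rightarrow> nat \<Rightarrow> bool list set" where
  "run_words p n k = {zs i @ os k @ zs (n - i - k) | i. p * k + 1 \<le> i \<and> i \<le> n - k}"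

lemma block_wordsI:
  "1 \<le> j \<Longrightarrow> j \<le> k \<Longrightarrow> i \<le> p - 1 \<Longrightarrow>
   w = zs (p * j - i) @ os (j - 1) @ zs i @ [True] @ concat (replicate (k - j) (zs p @ [True]))
         @ zs (n - (p + 1) * k) \<Longrightarrow> w \<in> block_words p n k"
  unfolding block_words_def by (intro UN_I[of j] CollectI exI[of _ i] conjI) auto

lemma run_wordsI: "p * k + 1 \<le> i \<Longrightarrow> i \<le> n - k \<Longrightarrow> w = zs i @ os k @ zs (n - i - k) \<Longrightarrow> w \<in> run_words p n k"
  unfolding run_words_def by (intro CollectI exI[of _ i] conjI) auto

lemma block_wordsE:
  assumes "w \<in> block_words p n k"
  obtains j i where "1 \<le> j" "j \<le> k" "i \<le> p - 1"
    "w = zs (p * j - i) @ os (j - 1) @ zs i @ [True] @ concat (replicate (k - j) (zs p @ [True]))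
           @ zs (n - (p + 1) * k)"
  using assms unfolding block_words_def by auto

lemma run_wordsE:
  assumes "w \<in> run_words p n k"
  obtains i where "p * k + 1 \<le> i" "i \<le> n - k" "w = zs i @ os k @ zs (n - i - k)"
  using assms unfolding run_words_def by auto

lemma concat_replicate_snoc: "concat (replicate (Suc t) xs) = concat (replicate t xs) @ xs"
  by (induct t) auto

lemma tail_ones_in_words:
  assumes "0 < k" "(p + 1) * k \<le> n"
  shows "tail_ones n k \<in> block_words p n k \<union> run_words p n k"
proof (cases "p * k + 1 \<le> n - k")
  case True
  then show ?thesis
    by (auto intro: run_wordsI[of p k "n - k"] simp: tail_ones_def)
next
  case False
  then have "n - k = p * k" "n - (p + 1) * k = 0"
    using assms by (auto simp: algebra_simps)
  moreover have "os k = os (k - 1) @ [True]"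
    using assms by (cases k) (simp_all add: replicate_append_same)
  ultimately have "tail_ones n k \<in> block_words p n k"
    using assms by (intro block_wordsI[of k k 0]) (auto simp: tail_ones_def)
  then show ?thesis by simp
qed

lemma words_snoc_False:
  assumes "w \<in> block_words p n k \<union> run_words p n k" "(p + 1) * k \<le> n"
  shows "w @ [False] \<in> block_words p (Suc n) k \<union> run_words p (Suc n) k"
  using assms(1)
proof
  assume "w \<in> block_words p n k"
  then obtain j i where "1 \<le> j" "j \<le> k" "i \<le> p - 1"
    "w = zs (p * j - i) @ os (j - 1) @ zs i @ [True] @ concat (replicate (k - j) (zs p @ [True]))
           @ zs (n - (p + 1) * k)"
    by (rule block_wordsE)
  moreover have "Suc n - (p + 1) * k = Suc (n - (p + 1) * k)"
    using assms(2) by (simp add: Suc_diff_le)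
  ultimately have "w @ [False] \<in> block_words p (Suc n) k"
    by (intro block_wordsI[of j k i]) (auto simp: replicate_append_same)
  then show ?thesis by simp
next
  assume "w \<in> run_words p n k"
  then obtain i where i: "p * k + 1 \<le> i" "i \<le> n - k" "w = zs i @ os k @ zs (n - i - k)"
    by (rule run_wordsE)
  moreover have "Suc n - i - k = Suc (n - i - k)"
    using i assms(2) by (simp add: Suc_diff_le)
  ultimately have "w @ [False] \<in> run_words p (Suc n) k"
    by (intro run_wordsI[of p k i]) (auto simp: replicate_append_same)
  then show ?thesis by simp
qed

lemma words_snoc_True_tight:
  assumes "w \<in> (if k = 0 then {zs n} else block_words p n k \<union> run_words p n k)"
    and tight: "Suc n = (p + 1) * Suc k"
  shows "w @ [True] \<in> block_words p (Suc n) (Suc k)"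
proof -
  have n: "n = (p + 1) * k + p"
    using tight by (simp add: algebra_simps)
  consider "k = 0" "w = zs n" | "w \<in> block_words p n k" | "w \<in> run_words p n k"
    using assms(1) by (auto split: if_splits)
  then show ?thesis
  proof cases
    case 1
    then show ?thesis
      using n by (intro block_wordsI[of 1 "Suc k" 0]) auto
  next
    case 2
    then obtain j i where ji: "1 \<le> j" "j \<le> k" "i \<le> p - 1"
      "w = zs (p * j - i) @ os (j - 1) @ zs i @ [True] @ concat (replicate (k - j) (zs p @ [True]))
             @ zs (n - (p + 1) * k)"
      by (rule block_wordsE)
    moreover have "Suc k - j = Suc (k - j)"
      using ji(2) by (simp add: Suc_diff_le)
    ultimately show ?thesis
      using n concat_replicate_snoc[of "k - j" "zs p @ [True]"]
      by (intro block_wordsI[of j "Suc k" i]) auto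
  next
    case 3
    then obtain i where i: "p * k + 1 \<le> i" "i \<le> n - k" "w = zs i @ os k @ zs (n - i - k)"
      by (rule run_wordsE)
    define i' where "i' = n - i - k"
    have "i' \<le> p - 1" "p * Suc k - i' = i"
      using i n unfolding i'_def by (auto simp: algebra_simps)
    then show ?thesis
      using i n unfolding i'_def[symmetric]
      by (intro block_wordsI[of "Suc k" "Suc k" i']) (auto simp: replicate_append_same)
  qed
qed

lemma gen_word_in_words:
  "gen_word p n k w \<Longrightarrow> w \<in> (if k = 0 then {zs n} else block_words p n k \<union> run_words p n k)"
proof (induction rule: gen_word.induct)
  case (tail k n)
  then show ?case
    using tail_ones_in_words by (simp add: tail_ones_def)
next
  case (snoc_False n k w)
  show ?case
  proof (cases "k = 0")
    case False
    then show ?thesis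
      using snoc_False words_snoc_False[of w p n k] by simp
  qed (use snoc_False in \<open>simp add: replicate_append_same\<close>)
next
  case (snoc_True n k w)
  then show ?case
    using words_snoc_True_tight by simp
qed

lemma gen_word_append_blocks:
  "gen_word p ((p + 1) * j) j w \<Longrightarrow>
   gen_word p ((p + 1) * (j + t)) (j + t) (w @ concat (replicate t (zs p @ [True])))"
proof (induction t)
  case (Suc t)
  let ?v = "w @ concat (replicate t (zs p @ [True]))"
  have "gen_word p ((p + 1) * (j + t) + p) (j + t) (?v @ zs p)"
    using Suc by (intro gen_word_append_zs) simp_all
  then have "gen_word p (Suc ((p + 1) * (j + t) + p)) (Suc (j + t)) ((?v @ zs p) @ [True])"
    by (rule gen_word.snoc_True) (simp add: algebra_simps)
  moreover have "Suc ((p + 1) * (j + t) + p) = (p + 1) * (j + Suc t)" "Suc (j + t) = j + Suc t"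
    by (simp_all add: algebra_simps)
  moreover have "(?v @ zs p) @ [True] = w @ concat (replicate (Suc t) (zs p @ [True]))"
    by (simp only: concat_replicate_snoc append_assoc)
  ultimately show ?case
    by (simp only:)
qed simp

lemma block_words_gen_word:
  assumes "(p + 1) * k \<le> n" "w \<in> block_words p n k"
  shows "gen_word p n k w"
proof -
  obtain j i where ji: "1 \<le> j" "j \<le> k" "i \<le> p - 1"
    and w: "w = zs (p * j - i) @ os (j - 1) @ zs i @ [True]
                  @ concat (replicate (k - j) (zs p @ [True])) @ zs (n - (p + 1) * k)"
    using assms(2) by (rule block_wordsE)
  obtain j1 where j: "j = Suc j1"
    using ji by (cases j) auto
  have le: "(p + 1) * j1 \<le> (p * j - i) + j1"
    using ji j by (cases p) (auto simp: algebra_simps)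
  have g: "gen_word p ((p * j - i) + j1 + i) j1 (tail_ones ((p * j - i) + j1) j1 @ zs i)"
    using gen_word_tail_ones_zs[OF le] .
  have e: "Suc ((p * j - i) + j1 + i) = (p + 1) * Suc j1"
    using ji j by (cases p) (auto simp: algebra_simps)
  have "gen_word p ((p + 1) * j) j ((tail_ones ((p * j - i) + j1) j1 @ zs i) @ [True])"
    using gen_word.snoc_True[OF g e] unfolding e j[symmetric] .
  from gen_word_append_blocks[OF this, of "k - j"]
  have "gen_word p ((p + 1) * k) k
      (((tail_ones ((p * j - i) + j1) j1 @ zs i) @ [True]) @ concat (replicate (k - j) (zs p @ [True])))"
    using ji by simp
  then have "gen_word p ((p + 1) * k + (n - (p + 1) * k)) k
      ((((tail_ones ((p * j - i) + j1) j1 @ zs i) @ [True]) @ concat (replicate (k - j) (zs p @ [True])))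
        @ zs (n - (p + 1) * k))"
    by (rule gen_word_append_zs) simp
  then show ?thesis
    using w j assms(1) by (simp add: tail_ones_def)
qed

lemma run_words_gen_word:
  assumes "w \<in> run_words p n k"
  shows "gen_word p n k w"
proof -
  obtain i where i: "p * k + 1 \<le> i" "i \<le> n - k" "w = zs i @ os k @ zs (n - i - k)"
    using assms by (rule run_wordsE)
  then have "gen_word p (i + k + (n - i - k)) k (tail_ones (i + k) k @ zs (n - i - k))"
    by (intro gen_word_tail_ones_zs) (simp add: algebra_simps)
  then show ?thesis
    using i by (simp add: tail_ones_def)
qed

lemma Gen_eq_words:
  assumes "0 < k" "(p + 1) * k \<le> n"
  shows "Gen p n k = block_words p n k \<union> run_words p n k"
  unfolding Gen_eq_gen_word
  using gen_word_in_words[of p n k] block_words_gen_word[OF assms(2)] run_words_gen_word assms(1)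
  by auto

lemma concat_replicate_True: "concat (replicate t [True]) = os t"
  by (induct t) auto

lemma block_words_p0:
  assumes "0 < k"
  shows "block_words 0 n k = {os k @ zs (n - k)}"
proof -
  have "os (j - 1) @ True # os (k - j) = os k" if "1 \<le> j" "j \<le> k" for j
    using that replicate_add[of "j - 1" "Suc (k - j)" True] by simp
  moreover have "\<exists>j\<ge>1. j \<le> k"
    using assms by auto
  ultimately show ?thesis
    by (auto simp: block_words_def concat_replicate_True)
qed

lemma words_p0:
  assumes "0 < k"
  shows "block_words 0 n k \<union> run_words 0 n k = {zs i @ os k @ zs (n - i - k) | i. i \<le> n - k}"
proof -
  have "{f i | i. i \<le> N} = insert (f 0) {f i | i. 1 \<le> i \<and> i \<le> N}" for f :: "nat \<Rightarrow> bool list" and N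
  proof -
    have "i \<le> N \<Longrightarrow> f i = f 0 \<or> (\<exists>i'. f i = f i' \<and> 1 \<le> i' \<and> i' \<le> N)" for i
      by (cases i) auto
    then show ?thesis by auto
  qed
  then show ?thesis
    unfolding block_words_p0[OF assms] run_words_def by simp
qed

subsection \<open>Counting the generators\<close>

lemma gen_word_Suc_nontight:
  assumes "0 < k" "(p + 1) * k \<le> m"
  shows "{w. gen_word p (Suc m) k w} = insert (tail_ones (Suc m) k) ((\<lambda>u. u @ [False]) ` {w. gen_word p m k w})"
proof (intro equalityI subsetI)
  fix w assume "w \<in> {w. gen_word p (Suc m) k w}"
  then have gen: "gen_word p (Suc m) k w"
    by simp
  obtain v b where w: "w = v @ [b]"
    using Cw_Suc_nonempty[OF gen_word_in_Cw[OF gen]] by (metis rev_exhaust)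
  show "w \<in> insert (tail_ones (Suc m) k) ((\<lambda>u. u @ [False]) ` {w. gen_word p m k w})"
  proof (cases b)
    case True
    then have "w = tail_ones (Suc m) k"
      using gen gen_word_snoc_True_iff[OF assms(1), of p m v] assms(2) unfolding w by auto
    then show ?thesis
      by simp
  next
    case False
    then have "gen_word p m k v"
      using gen gen_word_snoc_False_iff[OF assms(1), of p m v] unfolding w by simp
    then show ?thesis
      using False w by simp
  qed
qed (use gen_word.tail[of p k "Suc m"] gen_word.snoc_False[of p m k] assms in auto)

lemma gen_word_Suc_tight:
  assumes "0 < k" "Suc m = (p + 1) * k"
  shows "{w. gen_word p (Suc m) k w} = (\<lambda>u. u @ [True]) ` {w. gen_word p m (k - 1) w}"
proof (intro equalityI subsetI)
  have k: "(p + 1) * (k - 1) \<le> m" "k - 1 \<le> m"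
    using assms by (cases k; simp add: algebra_simps)+
  have tail: "tail_ones (Suc m) k = tail_ones m (k - 1) @ [True]"
    using tail_ones_snoc_True[OF k(2)] assms by simp
  fix w assume "w \<in> {w. gen_word p (Suc m) k w}"
  then have gen: "gen_word p (Suc m) k w"
    by simp
  obtain v b where w: "w = v @ [b]"
    using Cw_Suc_nonempty[OF gen_word_in_Cw[OF gen]] by (metis rev_exhaust)
  show "w \<in> (\<lambda>u. u @ [True]) ` {w. gen_word p m (k - 1) w}"
  proof (cases b)
    case True
    then have "v = tail_ones m (k - 1) \<or> gen_word p m (k - 1) v"
      using gen gen_word_snoc_True_iff[OF assms(1)] tail unfolding w by auto
    then show ?thesis
      using gen_word.tail[OF k(1)] w True by auto
  next
    case False
    then have "(p + 1) * k \<le> m"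
      using gen gen_word_snoc_False_iff[OF assms(1), of p m v] unfolding w by simp
    then show ?thesis
      using assms(2) by simp
  qed
qed (use gen_word.snoc_True[of p m "k - 1"] assms in auto)

lemma finite_gen_words: "finite {w. gen_word p n k w}"
  by (rule finite_subset[OF _ finite_Cw[of n p k]]) (auto intro: gen_word_in_Cw)

lemma card_gen_words:
  "0 < k \<Longrightarrow> (p + 1) * k \<le> n \<Longrightarrow> card {w. gen_word p n k w} + p + k = n + 1"
proof (induction n arbitrary: k)
  case (Suc m)
  show ?case
  proof (cases "(p + 1) * k \<le> m")
    case True
    have "tail_ones (Suc m) k \<notin> (\<lambda>u. u @ [False]) ` {w. gen_word p m k w}"
      using tail_ones_ne_snoc_False[OF Suc.prems(1)] by blast
    moreover have "card ((\<lambda>u. u @ [False]) ` {w. gen_word p m k w}) = card {w. gen_word p m k w}"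
      by (rule card_image) (simp add: inj_on_def)
    ultimately have "card {w. gen_word p (Suc m) k w} = Suc (card {w. gen_word p m k w})"
      unfolding gen_word_Suc_nontight[OF Suc.prems(1) True] using finite_gen_words by simp
    then show ?thesis
      using Suc.IH[OF Suc.prems(1) True] by simp
  next
    case False
    then have tight: "Suc m = (p + 1) * k"
      using Suc.prems by simp
    have card: "card {w. gen_word p (Suc m) k w} = card {w. gen_word p m (k - 1) w}"
      unfolding gen_word_Suc_tight[OF Suc.prems(1) tight] by (rule card_image) (simp add: inj_on_def)
    show ?thesis
    proof (cases "k = 1")
      case True
      then have "{w. gen_word p m (k - 1) w} = {zs m}"
        using gen_word_weight_0 by simp
      then show ?thesis
        using card tight True by simp
    next
      case False
      then have "(p + 1) * (k - 1) \<le> m" "0 < k - 1"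
        using tight Suc.prems by (cases k; simp add: algebra_simps)+
      then have "card {w. gen_word p m (k - 1) w} + p + (k - 1) = m + 1"
        by (rule Suc.IH[rotated])
      then show ?thesis
        using card Suc.prems by simp
    qed
  qed
qed simp

theorem proposition2:
  fixes p k n :: nat
  assumes "k \<ge> 1" and "n \<ge> (p + 1) * k"
  shows "(p \<ge> 1 \<longrightarrow>
            Gen p n k =
              (\<Union>j\<in>{1..k}. {zs (p * j - i) @ os (j - 1) @ zs i @ [True]
                                @ concat (replicate (k - j) (zs p @ [True]))
                                @ zs (n - (p + 1) * k) | i. i \<le> p - 1})
              \<union> {zs i @ os k @ zs (n - i - k) | i. p * k + 1 \<le> i \<and> i \<le> n - k})
       \<and> (p = 0 \<longrightarrow> Gen 0 n k = {zs i @ os k @ zs (n - i - k) | i. i \<le> n - k})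
       \<and> card (Gen p n k) = n - k + 1 - p"
proof -
  have k: "0 < k" and kn: "(p + 1) * k \<le> n"
    using assms by simp_all
  have Gen: "Gen p n k = block_words p n k \<union> run_words p n k"
    by (rule Gen_eq_words[OF k kn])
  have "card (Gen p n k) + p + k = n + 1"
    using card_gen_words[OF k kn] by (simp add: Gen_eq_gen_word)
  moreover have "k \<le> n"
    using kn by (simp add: algebra_simps)
  ultimately have "card (Gen p n k) = n - k + 1 - p"
    by linarith
  then show ?thesis
    using Gen words_p0[OF k] unfolding block_words_def run_words_def by auto
qed

end
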